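(* For every $n\in\mathbb{N}$, $\mathrm{C}_{\{0,\ldots,n\}}<_{sW}\mathrm{C}_{\sharp=n+1}$.
   Context: Represented spaces carry partial surjections $\delta:\subseteq\mathbb{N}^\mathbb{N}\to X$; a realizer $F$ of $f$ satisfies $\delta_YF(p)\in f(\delta_X(p))$ for $p\in\operatorname{dom}(f\delta_X)$. $f\leq_{sW}g$ iff there are computable partial $K,H$ on Baire space with $KGH$ realizing $f$ for every realizer $G$ of $g$; $f<_{sW}g$ means $f\leq_{sW}g$ and $g\not\leq_{sW}f$. $\mathrm{C}_{\{0,\ldots,n\}}$ is closed choice on the discrete space $\{0,\ldots,n\}$: given a non-empty subset via an enumeration of its complement, output an element. Closed subsets of Cantor space are named by binary trees (set of infinite paths); $\mathrm{C}_{\sharp=m}$ is the restriction of $\mathrm{C}_{\{0,1\}^\mathbb{N}}$ (output any point of the given non-empty closed set) to trees having exactly $m$ vertices at each level $k$ with $2^k\geq m$ and in which, from some finite depth on, every vertex has exactly one child. *)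

theory Defs
  imports Main "HOL-Library.Nat_Bijection"
begin

datatype recf = Zr | Sc | Proj nat | Cn recf "recf list" | Pr recf recf | Mn recf

definition nth0 :: "nat list \<Rightarrow> nat \<Rightarrow> nat" where
  "nth0 xs i = (if i < length xs then xs ! i else 0)"

inductive evalr :: "recf \<Rightarrow> nat list \<Rightarrow> nat \<Rightarrow> bool" where
  ev_Zr: "evalr Zr xs 0"
| ev_Sc: "evalr Sc xs (Suc (nth0 xs 0))"
| ev_Proj: "evalr (Proj i) xs (nth0 xs i)"
| ev_Cn: "\<lbrakk>length ys = length gs; \<forall>j<length gs. evalr (gs ! j) xs (ys ! j); evalr f ys r\<rbrakk>
          \<Longrightarrow> evalr (Cn f gs) xs r"
| ev_Pr0: "evalr f xs r \<Longrightarrow> evalr (Pr f g) (0 # xs) r"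
| ev_PrS: "\<lbrakk>evalr (Pr f g) (n # xs) y; evalr g (n # y # xs) r\<rbrakk>
          \<Longrightarrow> evalr (Pr f g) (Suc n # xs) r"
| ev_Mn: "\<lbrakk>evalr f (n # xs) 0; \<forall>m<n. \<exists>y. evalr f (m # xs) (Suc y)\<rbrakk>
          \<Longrightarrow> evalr (Mn f) xs n"

type_synonym baire = "nat \<Rightarrow> nat"

definition prefix_code :: "baire \<Rightarrow> nat \<Rightarrow> nat" where
  "prefix_code p k = list_encode (map p [0..<k])"

text \<open>Program phi computes output q from input p: to produce q n, phi is queried
  on (n, p|0), (n, p|1), ...; answer 0 means "read more input", answer Suc v means
  "q n = v".\<close>
definition tcomputes :: "recf \<Rightarrow> baire \<Rightarrow> baire \<Rightarrow> bool" where
  "tcomputes \<phi> p q \<longleftrightarrow>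
     (\<forall>n. \<exists>k. evalr \<phi> [n, prefix_code p k] (Suc (q n)) \<and>
               (\<forall>k'<k. evalr \<phi> [n, prefix_code p k'] 0))"

text \<open>A representation is a partial map from Baire space; a problem is a multi-valued
  function f :: 'a => 'b set with dom f = {x. f x ~= {}}.  Realizers are partial
  functions on Baire space.\<close>

definition is_realizer ::
  "(baire \<Rightarrow> 'a option) \<Rightarrow> (baire \<Rightarrow> 'b option) \<Rightarrow> ('a \<Rightarrow> 'b set) \<Rightarrow> (baire \<Rightarrow> baire option) \<Rightarrow> bool" where
  "is_realizer \<delta>X \<delta>Y f F \<longleftrightarrow>
     (\<forall>p x. \<delta>X p = Some x \<and> f x \<noteq> {} \<longrightarrow>
        (\<exists>q y. F p = Some q \<and> \<delta>Y q = Some y \<and> y \<in> f x))"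

definition sW_le ::
  "(baire \<Rightarrow> 'a option) \<Rightarrow> (baire \<Rightarrow> 'b option) \<Rightarrow> ('a \<Rightarrow> 'b set) \<Rightarrow>
   (baire \<Rightarrow> 'c option) \<Rightarrow> (baire \<Rightarrow> 'd option) \<Rightarrow> ('c \<Rightarrow> 'd set) \<Rightarrow> bool" where
  "sW_le \<delta>X \<delta>Y f \<delta>U \<delta>V g \<longleftrightarrow>
     (\<exists>\<phi>K \<phi>H. \<forall>G. is_realizer \<delta>U \<delta>V g G \<longrightarrow>
        (\<forall>p x. \<delta>X p = Some x \<and> f x \<noteq> {} \<longrightarrow>
           (\<exists>r q s y. tcomputes \<phi>H p r \<and> G r = Some q \<and> tcomputes \<phi>K q s \<and>
                     \<delta>Y s = Some y \<and> y \<in> f x)))"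

definition sW_less ::
  "(baire \<Rightarrow> 'a option) \<Rightarrow> (baire \<Rightarrow> 'b option) \<Rightarrow> ('a \<Rightarrow> 'b set) \<Rightarrow>
   (baire \<Rightarrow> 'c option) \<Rightarrow> (baire \<Rightarrow> 'd option) \<Rightarrow> ('c \<Rightarrow> 'd set) \<Rightarrow> bool" where
  "sW_less \<delta>X \<delta>Y f \<delta>U \<delta>V g \<longleftrightarrow> sW_le \<delta>X \<delta>Y f \<delta>U \<delta>V g \<and> \<not> sW_le \<delta>U \<delta>V g \<delta>X \<delta>Y f"

text \<open>Closed subsets A of {0..n} are named by enumerations of their complement:
  p names A iff all values of p are <= n+1 and A = {k <= n. Suc k not in range p}
  (value 0 is padding).\<close>
definition delta_fin_closed :: "nat \<Rightarrow> baire \<Rightarrow> nat set option" where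
  "delta_fin_closed n p =
     (if \<forall>i. p i \<le> Suc n then Some {k. k \<le> n \<and> (\<forall>i. p i \<noteq> Suc k)} else None)"

definition delta_fin :: "nat \<Rightarrow> baire \<Rightarrow> nat option" where
  "delta_fin n q = (if q 0 \<le> n then Some (q 0) else None)"

definition C_fin :: "nat set \<Rightarrow> nat set" where
  "C_fin A = A"

text \<open>Binary strings are coded bijectively by natural numbers.\<close>
fun bcode :: "bool list \<Rightarrow> nat" where
  "bcode [] = 0"
| "bcode (b # w) = 2 * bcode w + (if b then 2 else 1)"

definition is_tree :: "bool list set \<Rightarrow> bool" where
  "is_tree T \<longleftrightarrow> (\<forall>w v. w @ v \<in> T \<longrightarrow> w \<in> T)"

definition delta_tree :: "baire \<Rightarrow> bool list set option" where
  "delta_tree p =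
     (if (\<forall>i. p i \<le> 1) \<and> is_tree {w. p (bcode w) = 1}
      then Some {w. p (bcode w) = 1} else None)"

definition delta_cantor :: "baire \<Rightarrow> (nat \<Rightarrow> bool) option" where
  "delta_cantor q = (if \<forall>i. q i \<le> 1 then Some (\<lambda>i. q i = 1) else None)"

definition paths :: "bool list set \<Rightarrow> (nat \<Rightarrow> bool) set" where
  "paths T = {x. \<forall>k. map x [0..<k] \<in> T}"

definition width_tree :: "nat \<Rightarrow> bool list set \<Rightarrow> bool" where
  "width_tree m T \<longleftrightarrow>
     (\<forall>k. m \<le> 2 ^ k \<longrightarrow> card {w \<in> T. length w = k} = m) \<and>
     (\<exists>d. \<forall>w \<in> T. d \<le> length w \<longrightarrow> card {b. w @ [b] \<in> T} = 1)"

text \<open>C_{#=m}: the restriction of C_{2^N} (given a tree, output a path) to trees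
  satisfying width_tree m; on other trees the problem is undefined.\<close>
definition C_width :: "nat \<Rightarrow> bool list set \<Rightarrow> (nat \<Rightarrow> bool) set" where
  "C_width m T = (if width_tree m T then paths T else {})"

end

theory Submission
  imports Defs
begin

text \<open>From an enumeration of the complement of \<open>A \<subseteq> {0..n}\<close> one computes a binary tree with
  \<open>n + 1\<close> branches, one for each label \<open>j \<le> n\<close>, whose first \<open>label_bits n\<close> bits spell the label.
  Whenever the label of a branch is enumerated into the complement, the branch is re-spawned as a
  copy of a branch with a live label that splits off from it. As only finitely many labels die,
  all branches eventually carry labels in \<open>A\<close> and stop splitting, so the tree has width
  \<open>n + 1\<close>, becomes unary, and the first bits of any path name an element of \<open>A\<close>.

  Conversely, a strong reduction in the other direction must in particular work with the realizer
  of \<open>C\<^sub>{\<^sub>0\<^sub>,\<^sub>.\<^sub>.\<^sub>.\<^sub>,\<^sub>n\<^sub>}\<close> that answers with a constant name of the least element.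
  The outer functional then has only \<open>n + 1\<close> possible inputs, while the trees
  \<open>marked_tree n m\<close>, \<open>m \<in> \<nat>\<close>, all have width \<open>n + 1\<close> and pairwise disjoint sets of paths.\<close>

named_theorems computable_intros

section \<open>Total mu-recursive functions\<close>

inductive_cases evalr_ZrE: "evalr Zr xs r"
inductive_cases evalr_ScE: "evalr Sc xs r"
inductive_cases evalr_ProjE: "evalr (Proj i) xs r"
inductive_cases evalr_CnE: "evalr (Cn f gs) xs r"
inductive_cases evalr_Pr0E: "evalr (Pr f g) (0 # xs) r"
inductive_cases evalr_PrSE: "evalr (Pr f g) (Suc n # xs) r"
inductive_cases evalr_MnE: "evalr (Mn f) xs r"

lemma evalr_functional: "evalr f xs r \<Longrightarrow> evalr f xs r' \<Longrightarrow> r = r'"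
proof (induction arbitrary: r' rule: evalr.induct)
  case (ev_Zr xs) then show ?case by (auto elim: evalr_ZrE)
next
  case (ev_Sc xs) then show ?case by (auto elim: evalr_ScE)
next
  case (ev_Proj i xs) then show ?case by (auto elim: evalr_ProjE)
next
  case (ev_Cn ys gs xs f r)
  from ev_Cn.prems obtain ys' where y': "length ys' = length gs"
    "\<forall>j<length gs. evalr (gs ! j) xs (ys' ! j)" "evalr f ys' r'"
    by (rule evalr_CnE) blast
  have "ys = ys'"
  proof (rule nth_equalityI)
    show "length ys = length ys'" using y'(1) ev_Cn.hyps(1) by simp
    fix j assume "j < length ys"
    then have "j < length gs" using ev_Cn.hyps(1) by simp
    then show "ys ! j = ys' ! j" using ev_Cn.IH(1) y'(2) by blast
  qed
  then show ?case using ev_Cn.IH(2) y'(3) by blast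
next
  case (ev_Pr0 f xs r g)
  from ev_Pr0.prems have "evalr f xs r'" by (rule evalr_Pr0E)
  then show ?case using ev_Pr0.IH by blast
next
  case (ev_PrS f g n xs y r)
  from ev_PrS.prems obtain y' where "evalr (Pr f g) (n # xs) y'" "evalr g (n # y' # xs) r'"
    by (rule evalr_PrSE) blast
  then show ?case using ev_PrS.IH by blast
next
  case (ev_Mn f n xs)
  from ev_Mn.prems have "evalr f (r' # xs) 0" "\<forall>m<r'. \<exists>y. evalr f (m # xs) (Suc y)"
    by (auto elim: evalr_MnE)
  with ev_Mn.IH show ?case by (metis Zero_not_Suc linorder_neqE_nat)
qed

lemma tcomputes_functional: "tcomputes \<phi> p q \<Longrightarrow> tcomputes \<phi> p q' \<Longrightarrow> q = q'"
proof
  fix n assume "tcomputes \<phi> p q" "tcomputes \<phi> p q'"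
  then obtain k k' where k: "evalr \<phi> [n, prefix_code p k] (Suc (q n))" "\<forall>i<k. evalr \<phi> [n, prefix_code p i] 0"
    and k': "evalr \<phi> [n, prefix_code p k'] (Suc (q' n))" "\<forall>i<k'. evalr \<phi> [n, prefix_code p i] 0"
    unfolding tcomputes_def by blast
  have "k = k'" using k k' evalr_functional by (metis linorder_neqE_nat Zero_not_Suc)
  then show "q n = q' n" using k(1) k'(1) evalr_functional by blast
qed

definition computable :: "nat \<Rightarrow> (nat list \<Rightarrow> nat) \<Rightarrow> bool" where
  "computable m F \<longleftrightarrow> (\<exists>f. \<forall>xs. length xs = m \<longrightarrow> evalr f xs (F xs))"

lemma computable_cong:
  "computable m F \<Longrightarrow> (\<And>xs. length xs = m \<Longrightarrow> F xs = G xs) \<Longrightarrow>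
   computable m G"
  unfolding computable_def by (erule exE, rule_tac x=f in exI, simp)

lemma computable_zero: "computable m (\<lambda>xs. 0)"
  unfolding computable_def by (intro exI allI impI) (rule ev_Zr)

lemma computable_Suc_nth0: "computable m (\<lambda>xs. Suc (nth0 xs 0))"
  unfolding computable_def by (intro exI allI impI) (rule ev_Sc)

lemma computable_nth0[computable_intros]: "computable m (\<lambda>xs. nth0 xs i)"
  unfolding computable_def by (intro exI allI impI) (rule ev_Proj)

lemma computable_compose:
  assumes "computable k F" "length Gs = k" "\<forall>G\<in>set Gs. computable m G"
  shows "computable m (\<lambda>xs. F (map (\<lambda>G. G xs) Gs))"
proof -
  obtain f where f: "\<forall>xs. length xs = k \<longrightarrow> evalr f xs (F xs)" using assms(1) unfolding computable_def by blast
  define gs where "gs = map (\<lambda>G. SOME g. \<forall>xs. length xs = m \<longrightarrow> evalr g xs (G xs)) Gs"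
  have g: "\<forall>j<length Gs. \<forall>xs. length xs = m \<longrightarrow> evalr (gs ! j) xs ((Gs ! j) xs)"
  proof (intro allI impI)
    fix j and xs :: "nat list" assume j: "j < length Gs" and "length xs = m"
    have "\<exists>g. \<forall>xs. length xs = m \<longrightarrow> evalr g xs ((Gs!j) xs)" using assms(3) j computable_def by auto
    then have "\<forall>xs. length xs = m \<longrightarrow> evalr (gs!j) xs ((Gs!j) xs)"
      unfolding gs_def using j by (simp add: someI_ex[where P="\<lambda>g. \<forall>xs. length xs = m \<longrightarrow> evalr g xs ((Gs!j) xs)"])
    then show "evalr (gs ! j) xs ((Gs ! j) xs)" using \<open>length xs = m\<close> by blast
  qed
  show ?thesis unfolding computable_def
  proof (intro exI allI impI)
    fix xs :: "nat list" assume "length xs = m"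
    have lg: "length gs = length Gs" by (simp add: gs_def)
    show "evalr (Cn f gs) xs (F (map (\<lambda>G. G xs) Gs))"
    proof (rule ev_Cn[where ys="map (\<lambda>G. G xs) Gs"])
      show "length (map (\<lambda>G. G xs) Gs) = length gs" using lg by simp
      show "\<forall>j<length gs. evalr (gs ! j) xs (map (\<lambda>G. G xs) Gs ! j)"
        using g \<open>length xs = m\<close> lg by simp
      show "evalr f (map (\<lambda>G. G xs) Gs) (F (map (\<lambda>G. G xs) Gs))"
        using f assms(2) by simp
    qed
  qed
qed

lemma computable_rec_nat[computable_intros]:
  assumes "computable m B" "computable (Suc (Suc m)) (\<lambda>ys. S (nth0 ys 0) (nth0 ys 1) (tl (tl ys)))" "computable m N"
  shows "computable m (\<lambda>xs. rec_nat (B xs) (\<lambda>n y. S n y xs) (N xs))"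
proof -
  obtain fB where fB: "\<forall>xs. length xs = m \<longrightarrow> evalr fB xs (B xs)" using assms(1) unfolding computable_def by blast
  obtain fS where fS: "\<forall>ys. length ys = Suc (Suc m) \<longrightarrow> evalr fS ys (S (nth0 ys 0) (nth0 ys 1) (tl (tl ys)))"
    using assms(2) unfolding computable_def by blast
  obtain fN where fN: "\<forall>xs. length xs = m \<longrightarrow> evalr fN xs (N xs)" using assms(3) unfolding computable_def by blast
  have pr: "evalr (Pr fB fS) (n # xs) (rec_nat (B xs) (\<lambda>n y. S n y xs) n)" if "length xs = m" for n xs
  proof (induction n)
    case 0 then show ?case using fB that by (simp add: ev_Pr0)
  next
    case (Suc n)
    have "evalr fS (n # rec_nat (B xs) (\<lambda>n y. S n y xs) n # xs) (S n (rec_nat (B xs) (\<lambda>n y. S n y xs) n) xs)"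
      using fS[rule_format, of "n # rec_nat (B xs) (\<lambda>n y. S n y xs) n # xs"] that by (simp add: nth0_def)
    then show ?case using Suc by (simp add: ev_PrS)
  qed
  show ?thesis unfolding computable_def
  proof (intro exI allI impI)
    fix xs :: "nat list" assume l: "length xs = m"
    show "evalr (Cn (Pr fB fS) (fN # map Proj [0..<m])) xs (rec_nat (B xs) (\<lambda>n y. S n y xs) (N xs))"
    proof (rule ev_Cn[where ys="N xs # xs"])
      show "length (N xs # xs) = length (fN # map Proj [0..<m])" using l by simp
      show "\<forall>j<length (fN # map Proj [0..<m]). evalr ((fN # map Proj [0..<m]) ! j) xs ((N xs # xs) ! j)"
      proof (intro allI impI)
        fix j assume j: "j < length (fN # map Proj [0..<m])"
        show "evalr ((fN # map Proj [0..<m]) ! j) xs ((N xs # xs) ! j)"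
        proof (cases j)
          case 0 then show ?thesis using fN l by simp
        next
          case (Suc i)
          then have "i < m" using j by simp
          then have "(N xs # xs) ! j = nth0 xs i" using Suc l by (simp add: nth0_def)
          moreover have "(fN # map Proj [0..<m]) ! j = Proj i" using Suc \<open>i < m\<close> by simp
          ultimately show ?thesis by (simp add: ev_Proj)
        qed
      qed
      show "evalr (Pr fB fS) (N xs # xs) (rec_nat (B xs) (\<lambda>n y. S n y xs) (N xs))" using pr l by simp
    qed
  qed
qed

lemma nth0_tl[simp]: "nth0 (tl xs) i = nth0 xs (Suc i)"
  by (cases xs) (auto simp: nth0_def)

lemma nth0_Cons_0[simp]: "nth0 (x # xs) 0 = x" by (simp add: nth0_def)
lemma nth0_Cons_Suc[simp]: "nth0 (x # xs) (Suc i) = nth0 xs i" by (simp add: nth0_def)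

lemma computable_compose1:
  assumes "computable 1 (\<lambda>xs. f (nth0 xs 0))" "computable m F"
  shows "computable m (\<lambda>xs. f (F xs))"
proof -
  have "computable m (\<lambda>xs. (\<lambda>xs. f (nth0 xs 0)) (map (\<lambda>G. G xs) [F]))"
    by (rule computable_compose[OF assms(1)]) (use assms(2) in auto)
  then show ?thesis by (rule computable_cong) simp
qed

lemma computable_compose2:
  assumes "computable 2 (\<lambda>xs. f (nth0 xs 0) (nth0 xs 1))" "computable m F" "computable m G"
  shows "computable m (\<lambda>xs. f (F xs) (G xs))"
proof -
  have "computable m (\<lambda>xs. (\<lambda>xs. f (nth0 xs 0) (nth0 xs 1)) (map (\<lambda>G. G xs) [F, G]))"
    by (rule computable_compose[OF assms(1)]) (use assms(2,3) in auto)
  then show ?thesis by (rule computable_cong) simp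
qed

lemma computable_compose3:
  assumes "computable 3 (\<lambda>xs. f (nth0 xs 0) (nth0 xs 1) (nth0 xs 2))" "computable m F" "computable m G" "computable m H"
  shows "computable m (\<lambda>xs. f (F xs) (G xs) (H xs))"
proof -
  have "computable m (\<lambda>xs. (\<lambda>xs. f (nth0 xs 0) (nth0 xs 1) (nth0 xs 2)) (map (\<lambda>G. G xs) [F, G, H]))"
    by (rule computable_compose[OF assms(1)]) (use assms(2,3,4) in auto)
  then show ?thesis by (rule computable_cong) (simp add: numeral_eq_Suc)
qed

lemma computable_const[computable_intros]: "computable m (\<lambda>xs. c)"
proof (induction c)
  case 0 then show ?case by (rule computable_zero)
next
  case (Suc c)
  show ?case using computable_compose1[where f=Suc, OF computable_Suc_nth0 Suc] .
qed

lemma computable_tl: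
  assumes "computable m B" shows "computable (Suc m) (\<lambda>ys. B (tl ys))"
proof -
  have "computable (Suc m) (\<lambda>ys. B (map (\<lambda>G. G ys) (map (\<lambda>i ys. nth0 ys (Suc i)) [0..<m])))"
    by (rule computable_compose[OF assms]) (auto intro: computable_nth0)
  then show ?thesis
  proof (rule computable_cong)
    fix ys :: "nat list" assume l: "length ys = Suc m"
    have "map (\<lambda>G. G ys) (map (\<lambda>i ys. nth0 ys (Suc i)) [0..<m]) = tl ys"
      by (rule nth_equalityI) (use l in \<open>auto simp: nth0_def nth_tl\<close>)
    then show "B (map (\<lambda>G. G ys) (map (\<lambda>i ys. nth0 ys (Suc i)) [0..<m])) = B (tl ys)" by simp
  qed
qed

lemma computable_add_nth0: "computable 2 (\<lambda>xs. nth0 xs 0 + nth0 xs 1)"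
proof -
  have "computable 2 (\<lambda>xs. rec_nat (nth0 xs 1) (\<lambda>n y. (\<lambda>n y xs. Suc y) n y xs) (nth0 xs 0))"
    by (rule computable_rec_nat) (auto intro: computable_nth0 computable_compose1[OF computable_Suc_nth0])
  moreover have "rec_nat b (\<lambda>n y. Suc y) a = a + b" for a b :: nat
    by (induction a) auto
  ultimately show ?thesis by (rule_tac computable_cong) auto
qed

lemma computable_mult_nth0: "computable 2 (\<lambda>xs. nth0 xs 0 * nth0 xs 1)"
proof -
  have "computable 2 (\<lambda>xs. rec_nat 0 (\<lambda>n y. (\<lambda>n y xs. y + nth0 xs 1) n y xs) (nth0 xs 0))"
    by (rule computable_rec_nat)
      (auto intro: computable_nth0 computable_const computable_compose2[OF computable_add_nth0])
  moreover have "rec_nat 0 (\<lambda>n y. y + b) a = a * b" for a b :: nat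
    by (induction a) auto
  ultimately show ?thesis by (rule_tac computable_cong) auto
qed

lemma computable_diff_nth0: "computable 2 (\<lambda>xs. nth0 xs 0 - nth0 xs 1)"
proof -
  have "computable 1 (\<lambda>xs. rec_nat 0 (\<lambda>n y. (\<lambda>n y xs. n) n y xs) (nth0 xs 0))"
    by (rule computable_rec_nat) (auto intro: computable_nth0 computable_const)
  moreover have "rec_nat 0 (\<lambda>n y. n) a = a - 1" for a :: nat
    by (cases a) auto
  ultimately have pred: "computable 1 (\<lambda>xs. nth0 xs 0 - 1)"
    by (rule_tac computable_cong) auto
  have "computable 2 (\<lambda>xs. rec_nat (nth0 xs 0) (\<lambda>n y. (\<lambda>n y xs. y - 1) n y xs) (nth0 xs 1))"
    by (intro computable_rec_nat computable_nth0 computable_compose1[OF pred computable_nth0])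
  moreover have "rec_nat a (\<lambda>n y. y - 1) b = a - b" for a b :: nat
    by (induction b) auto
  ultimately show ?thesis by (rule_tac computable_cong) auto
qed

lemma computable_add[computable_intros]:
  "computable m F \<Longrightarrow> computable m G \<Longrightarrow>
   computable m (\<lambda>xs. F xs + G xs)"
  by (rule computable_compose2[OF computable_add_nth0])
lemma computable_mult[computable_intros]:
  "computable m F \<Longrightarrow> computable m G \<Longrightarrow>
   computable m (\<lambda>xs. F xs * G xs)"
  by (rule computable_compose2[OF computable_mult_nth0])
lemma computable_diff[computable_intros]:
  "computable m F \<Longrightarrow> computable m G \<Longrightarrow>
   computable m (\<lambda>xs. F xs - G xs)"
  by (rule computable_compose2[OF computable_diff_nth0])
lemma computable_Suc[computable_intros]:
  "computable m F \<Longrightarrow> computable m (\<lambda>xs. Suc (F xs))"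
  by (rule computable_compose1[OF computable_Suc_nth0])

definition decidable :: "nat \<Rightarrow> (nat list \<Rightarrow> bool) \<Rightarrow> bool" where
  "decidable m P \<longleftrightarrow> computable m (\<lambda>xs. if P xs then 1 else 0)"

lemma decidable_less[computable_intros]:
  "computable m F \<Longrightarrow> computable m G \<Longrightarrow>
   decidable m (\<lambda>xs. F xs < G xs)"
proof -
  assume "computable m F" "computable m G"
  then have "computable m (\<lambda>xs. 1 - (1 - (G xs - F xs)))" by (intro computable_diff computable_const)
  then show ?thesis unfolding decidable_def by (rule computable_cong) auto
qed

lemma decidable_not[computable_intros]:
  "decidable m P \<Longrightarrow> decidable m (\<lambda>xs. \<not> P xs)"
proof -
  assume "decidable m P"
  then have "computable m (\<lambda>xs. 1 - (if P xs then 1 else 0))" unfolding decidable_def by (intro computable_diff computable_const)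
  then show ?thesis unfolding decidable_def by (rule computable_cong) auto
qed

lemma decidable_conj[computable_intros]:
  "decidable m P \<Longrightarrow> decidable m Q \<Longrightarrow>
   decidable m (\<lambda>xs. P xs \<and> Q xs)"
proof -
  assume "decidable m P" "decidable m Q"
  then have "computable m (\<lambda>xs. (if P xs then 1 else 0) * (if Q xs then 1 else 0))" unfolding decidable_def by (intro computable_mult)
  then show ?thesis unfolding decidable_def by (rule computable_cong) auto
qed

lemma decidable_disj[computable_intros]:
  "decidable m P \<Longrightarrow> decidable m Q \<Longrightarrow>
   decidable m (\<lambda>xs. P xs \<or> Q xs)"
proof -
  assume "decidable m P" "decidable m Q"
  then have "decidable m (\<lambda>xs. \<not> (\<not> P xs \<and> \<not> Q xs))" by (intro decidable_not decidable_conj)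
  then show ?thesis by (simp add: decidable_def)
qed

lemma decidable_le[computable_intros]:
  "computable m F \<Longrightarrow> computable m G \<Longrightarrow>
   decidable m (\<lambda>xs. F xs \<le> G xs)"
proof -
  assume "computable m F" "computable m G"
  then have "decidable m (\<lambda>xs. \<not> G xs < F xs)" by (intro decidable_not decidable_less)
  then show ?thesis by (simp add: decidable_def not_less)
qed

lemma decidable_eq[computable_intros]:
  "computable m F \<Longrightarrow> computable m G \<Longrightarrow>
   decidable m (\<lambda>xs. F xs = G xs)"
proof -
  assume "computable m F" "computable m G"
  then have "decidable m (\<lambda>xs. F xs \<le> G xs \<and> G xs \<le> F xs)" by (intro decidable_conj decidable_le)
  then show ?thesis by (simp add: decidable_def eq_iff)
qed

lemma decidable_iff[computable_intros]:
  "decidable m P \<Longrightarrow> decidable m Q \<Longrightarrow>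
   decidable m (\<lambda>xs. P xs = Q xs)"
proof -
  assume "decidable m P" "decidable m Q"
  then have "decidable m (\<lambda>xs. (P xs \<and> Q xs) \<or> (\<not> P xs \<and> \<not> Q xs))" by (intro decidable_disj decidable_conj decidable_not)
  then show ?thesis unfolding decidable_def by (rule computable_cong) auto
qed

lemma computable_if[computable_intros]:
  "decidable m P \<Longrightarrow> computable m F \<Longrightarrow> computable m G \<Longrightarrow>
   computable m (\<lambda>xs. if P xs then F xs else G xs)"
proof -
  assume "decidable m P" "computable m F" "computable m G"
  then have "computable m (\<lambda>xs. (if P xs then 1 else 0) * F xs + (1 - (if P xs then 1 else 0)) * G xs)"
    unfolding decidable_def by (intro computable_add computable_mult computable_diff computable_const)
  then show ?thesis by (rule computable_cong) auto
qed

text \<open>The bound \<open>B\<close> makes the search terminate, so that minimisation yields a total function.\<close>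

lemma computable_bounded_Least[computable_intros]:
  assumes B: "computable m B" and P: "decidable (Suc m) (\<lambda>ys. P (nth0 ys 0) (tl ys))"
  shows "computable m (\<lambda>xs. LEAST t. P t xs \<or> B xs \<le> t)"
proof -
  have "computable (Suc m) (\<lambda>ys. if P (nth0 ys 0) (tl ys) \<or> B (tl ys) \<le> nth0 ys 0 then 0 else 1)"
    by (intro computable_if decidable_disj P decidable_le computable_tl B computable_nth0 computable_const)
  then obtain f where f: "\<forall>ys. length ys = Suc m \<longrightarrow>
     evalr f ys (if P (nth0 ys 0) (tl ys) \<or> B (tl ys) \<le> nth0 ys 0 then 0 else 1)"
    unfolding computable_def by blast
  show ?thesis unfolding computable_def
  proof (intro exI allI impI)
    fix xs :: "nat list" assume l: "length xs = m"
    let ?r = "LEAST t. P t xs \<or> B xs \<le> t"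
    have r: "P ?r xs \<or> B xs \<le> ?r" by (rule LeastI[of _ "B xs"]) simp
    show "evalr (Mn f) xs ?r"
    proof (rule ev_Mn)
      show "evalr f (?r # xs) 0" using f[rule_format, of "?r # xs"] l r by simp
      show "\<forall>m<?r. \<exists>y. evalr f (m # xs) (Suc y)"
      proof (intro allI impI)
        fix k assume "k < ?r"
        then have "\<not> (P k xs \<or> B xs \<le> k)" by (rule not_less_Least)
        then show "\<exists>y. evalr f (k # xs) (Suc y)" using f[rule_format, of "k # xs"] l
          by (intro exI[of _ 0]) simp
      qed
    qed
  qed
qed

lemma decidable_bounded_ex[computable_intros]:
  assumes B: "computable m B" and P: "decidable (Suc m) (\<lambda>ys. P (nth0 ys 0) (tl ys))"
  shows "decidable m (\<lambda>xs. \<exists>t<B xs. P t xs)"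
proof -
  have "decidable m (\<lambda>xs. (LEAST t. P t xs \<or> B xs \<le> t) < B xs)"
    by (intro decidable_less computable_bounded_Least B P)
  moreover have "((LEAST t. P t xs \<or> B xs \<le> t) < B xs) = (\<exists>t<B xs. P t xs)" for xs
  proof
    assume "(LEAST t. P t xs \<or> B xs \<le> t) < B xs"
    moreover have "P (LEAST t. P t xs \<or> B xs \<le> t) xs \<or> B xs \<le> (LEAST t. P t xs \<or> B xs \<le> t)"
      by (rule LeastI[of _ "B xs"]) simp
    ultimately show "\<exists>t<B xs. P t xs" by auto
  next
    assume "\<exists>t<B xs. P t xs"
    then obtain t where "t < B xs" "P t xs" by blast
    then have "(LEAST t. P t xs \<or> B xs \<le> t) \<le> t" by (intro Least_le) simp
    then show "(LEAST t. P t xs \<or> B xs \<le> t) < B xs" using \<open>t < B xs\<close> by simp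
  qed
  ultimately show ?thesis by (simp add: decidable_def)
qed

lemma decidable_bounded_all[computable_intros]:
  assumes B: "computable m B" and P: "decidable (Suc m) (\<lambda>ys. P (nth0 ys 0) (tl ys))"
  shows "decidable m (\<lambda>xs. \<forall>t<B xs. P t xs)"
proof -
  have "decidable m (\<lambda>xs. \<not> (\<exists>t<B xs. \<not> P t xs))"
    by (intro decidable_not decidable_bounded_ex B P)
  then show ?thesis by (simp add: decidable_def)
qed

lemma div_eq_Least:
  "(y::nat) > 0 \<Longrightarrow> x div y = (LEAST q. x < Suc q * y \<or> x \<le> q)"
proof -
  assume y: "y > 0"
  show ?thesis
  proof (rule Least_equality[symmetric])
    show "x < Suc (x div y) * y \<or> x \<le> x div y"
      using y by (metis div_mult_mod_eq mod_less_divisor add_less_mono1 mult_Suc add.commute disjI1 add_less_cancel_left)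
    fix q assume "x < Suc q * y \<or> x \<le> q"
    then show "x div y \<le> q"
    proof
      assume "x < Suc q * y"
      then have "x div y < Suc q" using y by (simp add: div_less_iff_less_mult)
      then show ?thesis by simp
    next
      assume "x \<le> q" then show ?thesis using div_le_dividend order_trans by blast
    qed
  qed
qed

lemma computable_div[computable_intros]:
  "computable m F \<Longrightarrow> computable m G \<Longrightarrow>
   computable m (\<lambda>xs. F xs div G xs)"
proof -
  assume F: "computable m F" and G: "computable m G"
  have "computable m (\<lambda>xs. if G xs = 0 then 0 else (LEAST q. Suc q * G xs > F xs \<or> F xs \<le> q))"
    by (intro computable_if decidable_eq G computable_const computable_bounded_Least F decidable_less computable_mult computable_Suc computable_nth0 computable_tl; simp)
  then show ?thesis by (rule computable_cong) (auto simp: div_eq_Least)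
qed

lemma computable_mod[computable_intros]:
  "computable m F \<Longrightarrow> computable m G \<Longrightarrow>
   computable m (\<lambda>xs. F xs mod G xs)"
proof -
  assume "computable m F" "computable m G"
  then have "computable m (\<lambda>xs. F xs - G xs * (F xs div G xs))" by (intro computable_diff computable_mult computable_div)
  then show ?thesis by (rule computable_cong) (simp add: minus_mult_div_eq_mod)
qed

lemma computable_power[computable_intros]:
  "computable m F \<Longrightarrow> computable m G \<Longrightarrow>
   computable m (\<lambda>xs. F xs ^ G xs)"
proof -
  assume F: "computable m F" and G: "computable m G"
  have "computable m (\<lambda>xs. rec_nat 1 (\<lambda>n y. (\<lambda>n y xs. y * F xs) n y xs) (G xs))"
    by (intro computable_rec_nat computable_const computable_mult computable_nth0 computable_tl[of m "\<lambda>xs. F (tl xs)", simplified] computable_tl F G)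
  moreover have "rec_nat 1 (\<lambda>n y. y * a) b = a ^ b" for a b :: nat
    by (induction b) (simp_all add: mult.commute[of _ a])
  ultimately show ?thesis by (rule_tac computable_cong) auto
qed

lemma decidable_odd[computable_intros]:
  "computable m F \<Longrightarrow> decidable m (\<lambda>xs. odd (F xs))"
proof -
  assume F: "computable m F"
  have "decidable m (\<lambda>xs. F xs mod 2 = 1)" by (intro decidable_eq computable_mod F computable_const)
  then show ?thesis by (simp add: decidable_def odd_iff_mod_2_eq_one)
qed

lemma computable_max[computable_intros]:
  "computable m F \<Longrightarrow> computable m G \<Longrightarrow>
   computable m (\<lambda>xs. max (F xs) (G xs))"
proof -
  assume "computable m F" "computable m G"
  then have "computable m (\<lambda>xs. if F xs \<le> G xs then G xs else F xs)" by (intro computable_if decidable_le)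
  then show ?thesis by (simp add: max_def)
qed

section \<open>Computable decoding of lists and binary words\<close>

text \<open>\<open>prod_decode\<close> recast as a bounded search, which makes its computability evident.\<close>

definition fst_decode :: "nat \<Rightarrow> nat" where
  "fst_decode c = (LEAST a. (\<exists>b<Suc c. prod_encode (a, b) = c) \<or> c \<le> a)"
definition snd_decode :: "nat \<Rightarrow> nat" where
  "snd_decode c = (LEAST b. (\<exists>a<Suc c. prod_encode (a, b) = c) \<or> c \<le> b)"

lemma fst_decode_eq: "fst_decode c = fst (prod_decode c)"
  unfolding fst_decode_def
proof (rule Least_equality)
  obtain a b where ab: "prod_decode c = (a, b)" by (cases "prod_decode c")
  then have e: "prod_encode (a, b) = c" by (metis prod_decode_inverse)
  have "b < Suc c" using le_prod_encode_2[where a=a and b=b] e by simp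
  then show "(\<exists>b<Suc c. prod_encode (fst (prod_decode c), b) = c) \<or> c \<le> fst (prod_decode c)"
    using ab e by auto
  fix y assume "(\<exists>b<Suc c. prod_encode (y, b) = c) \<or> c \<le> y"
  then show "fst (prod_decode c) \<le> y"
  proof
    assume "\<exists>b<Suc c. prod_encode (y, b) = c"
    then obtain b' where "prod_encode (y, b') = c" by blast
    then have "prod_decode c = (y, b')" by auto
    then show ?thesis by simp
  next
    assume "c \<le> y" then show ?thesis using le_prod_encode_1[where a=a and b=b] e ab by simp
  qed
qed

lemma snd_decode_eq: "snd_decode c = snd (prod_decode c)"
  unfolding snd_decode_def
proof (rule Least_equality)
  obtain a b where ab: "prod_decode c = (a, b)" by (cases "prod_decode c")
  then have e: "prod_encode (a, b) = c" by (metis prod_decode_inverse)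
  have "a < Suc c" using le_prod_encode_1[where a=a and b=b] e by simp
  then show "(\<exists>a<Suc c. prod_encode (a, snd (prod_decode c)) = c) \<or> c \<le> snd (prod_decode c)"
    using ab e by auto
  fix y assume "(\<exists>a<Suc c. prod_encode (a, y) = c) \<or> c \<le> y"
  then show "snd (prod_decode c) \<le> y"
  proof
    assume "\<exists>a<Suc c. prod_encode (a, y) = c"
    then obtain a' where "prod_encode (a', y) = c" by blast
    then have "prod_decode c = (a', y)" by auto
    then show ?thesis by simp
  next
    assume "c \<le> y" then show ?thesis using le_prod_encode_2[where a=a and b=b] e ab by simp
  qed
qed

lemma prod_encode_eq_triangle: "prod_encode (a, b) = (a + b) * Suc (a + b) div 2 + a"
  by (simp add: prod_encode_def triangle_def)

lemma computable_prod_encode[computable_intros]: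
  assumes "computable m F" "computable m G"
  shows "computable m (\<lambda>xs. prod_encode (F xs, G xs))"
proof -
  have "computable 2 (\<lambda>xs. (nth0 xs 0 + nth0 xs 1) * Suc (nth0 xs 0 + nth0 xs 1) div 2 + nth0 xs 0)"
    by (intro computable_intros)
  then have "computable 2 (\<lambda>xs. prod_encode (nth0 xs 0, nth0 xs 1))"
    by (rule computable_cong) (simp only: prod_encode_eq_triangle)
  then show ?thesis using assms
    by (rule computable_compose2)
qed

lemma computable_fst_decode[computable_intros]:
  assumes "computable m F"
  shows "computable m (\<lambda>xs. fst_decode (F xs))"
proof -
  have "computable 1 (\<lambda>xs. LEAST a. (\<exists>b<Suc (nth0 xs 0). prod_encode (a, b) = nth0 xs 0) \<or> nth0 xs 0 \<le> a)"
    by (intro computable_intros | simp only: nth0_tl)+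
  then have "computable 1 (\<lambda>xs. fst_decode (nth0 xs 0))" by (simp only: fst_decode_def)
  then show ?thesis using assms by (rule computable_compose1)
qed

lemma computable_snd_decode[computable_intros]:
  assumes "computable m F"
  shows "computable m (\<lambda>xs. snd_decode (F xs))"
proof -
  have "computable 1 (\<lambda>xs. LEAST b. (\<exists>a<Suc (nth0 xs 0). prod_encode (a, b) = nth0 xs 0) \<or> nth0 xs 0 \<le> b)"
    by (intro computable_intros | simp only: nth0_tl)+
  then have "computable 1 (\<lambda>xs. snd_decode (nth0 xs 0))" by (simp only: snd_decode_def)
  then show ?thesis using assms by (rule computable_compose1)
qed

text \<open>A non-empty list is coded as \<open>Suc (prod_encode (x, list_encode xs))\<close>.\<close>

definition tl_code :: "nat \<Rightarrow> nat" where "tl_code c = snd_decode (c - 1)"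
definition hd_code :: "nat \<Rightarrow> nat" where "hd_code c = fst_decode (c - 1)"
definition drop_code :: "nat \<Rightarrow> nat \<Rightarrow> nat" where "drop_code t c = rec_nat c (\<lambda>n y. tl_code y) t"
definition nth_code :: "nat \<Rightarrow> nat \<Rightarrow> nat" where "nth_code c t = hd_code (drop_code t c)"
definition length_code :: "nat \<Rightarrow> nat" where "length_code c = (LEAST t. drop_code t c = 0 \<or> c \<le> t)"

lemma computable_tl_code[computable_intros]:
  "computable m F \<Longrightarrow> computable m (\<lambda>xs. tl_code (F xs))"
  unfolding tl_code_def by (intro computable_snd_decode computable_intros)
lemma computable_hd_code[computable_intros]:
  "computable m F \<Longrightarrow> computable m (\<lambda>xs. hd_code (F xs))"
  unfolding hd_code_def by (intro computable_fst_decode computable_intros)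

lemma computable_drop_code[computable_intros]:
  assumes "computable m F" "computable m G"
  shows "computable m (\<lambda>xs. drop_code (F xs) (G xs))"
proof -
  have "computable 2 (\<lambda>xs. rec_nat (nth0 xs 1) (\<lambda>n y. tl_code y) (nth0 xs 0))"
    by (intro computable_intros | simp only: nth0_tl)+
  then have "computable 2 (\<lambda>xs. drop_code (nth0 xs 0) (nth0 xs 1))" by (simp only: drop_code_def)
  then show ?thesis using assms by (rule computable_compose2)
qed

lemma computable_nth_code[computable_intros]:
  "computable m F \<Longrightarrow> computable m G \<Longrightarrow>
   computable m (\<lambda>xs. nth_code (F xs) (G xs))"
  unfolding nth_code_def by (intro computable_intros)

lemma computable_length_code[computable_intros]:
  assumes "computable m F"
  shows "computable m (\<lambda>xs. length_code (F xs))"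
proof -
  have "computable 1 (\<lambda>xs. LEAST t. drop_code t (nth0 xs 0) = 0 \<or> nth0 xs 0 \<le> t)"
    by (intro computable_intros | simp only: nth0_tl)+
  then have "computable 1 (\<lambda>xs. length_code (nth0 xs 0))" by (simp only: length_code_def)
  then show ?thesis using assms by (rule computable_compose1)
qed

lemma tl_code_Suc[simp]: "tl_code (Suc (prod_encode (x, y))) = y"
  by (simp add: tl_code_def snd_decode_eq)
lemma hd_code_Suc[simp]: "hd_code (Suc (prod_encode (x, y))) = x"
  by (simp add: hd_code_def fst_decode_eq)
lemma tl_code_list_encode: "tl_code (list_encode (x # xs)) = list_encode xs"
  by simp
lemma hd_code_list_encode: "hd_code (list_encode (x # xs)) = x"
  by simp
lemma tl_code_0: "tl_code 0 = 0"
  by (simp add: tl_code_def snd_decode_eq prod_decode_def prod_decode_aux.simps)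

lemma drop_code_list_encode: "drop_code t (list_encode xs) = list_encode (drop t xs)"
proof (induction t)
  case 0 then show ?case by (simp add: drop_code_def)
next
  case (Suc t)
  have "drop_code (Suc t) (list_encode xs) = tl_code (drop_code t (list_encode xs))" by (simp add: drop_code_def)
  also have "\<dots> = tl_code (list_encode (drop t xs))" using Suc by simp
  also have "\<dots> = list_encode (drop (Suc t) xs)"
  proof (cases "drop t xs")
    case Nil then show ?thesis by (simp add: tl_code_0 drop_Suc tl_drop)
  next
    case (Cons y ys) then show ?thesis by (simp add: tl_code_list_encode drop_Suc tl_drop[symmetric])
  qed
  finally show ?case .
qed

lemma nth_code_list_encode: "t < length xs \<Longrightarrow> nth_code (list_encode xs) t = xs ! t"
  by (simp add: nth_code_def drop_code_list_encode Cons_nth_drop_Suc[symmetric] hd_code_list_encode)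

lemma length_le_list_encode: "length xs \<le> list_encode xs"
proof (induction xs)
  case Nil then show ?case by simp
next
  case (Cons x xs)
  have "list_encode xs \<le> prod_encode (x, list_encode xs)" by (rule le_prod_encode_2)
  then show ?case using Cons by simp
qed

lemma length_code_list_encode: "length_code (list_encode xs) = length xs"
  unfolding length_code_def
proof (rule Least_equality)
  show "drop_code (length xs) (list_encode xs) = 0 \<or> list_encode xs \<le> length xs" by (simp add: drop_code_list_encode)
  fix y assume "drop_code y (list_encode xs) = 0 \<or> list_encode xs \<le> y"
  then show "length xs \<le> y"
  proof
    assume "drop_code y (list_encode xs) = 0"
    then have "list_encode (drop y xs) = list_encode []" by (simp add: drop_code_list_encode)
    then have "drop y xs = []" using list_encode_eq by blast
    then show ?thesis by simp
  next
    assume "list_encode xs \<le> y" then show ?thesis using length_le_list_encode[of xs] by simp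
  qed
qed

lemma length_code_prefix_code: "length_code (prefix_code p k) = k"
  by (simp add: prefix_code_def length_code_list_encode)
lemma nth_code_prefix_code: "t < k \<Longrightarrow> nth_code (prefix_code p k) t = p t"
  by (simp add: prefix_code_def nth_code_list_encode)

text \<open>\<open>bcode (b # w)\<close> is even iff \<open>b\<close>, so the letters of a word are read off as parities.\<close>

definition bdrop_code :: "nat \<Rightarrow> nat \<Rightarrow> nat" where "bdrop_code t c = rec_nat c (\<lambda>n y. (y - 1) div 2) t"
definition bnth_code :: "nat \<Rightarrow> nat \<Rightarrow> bool" where "bnth_code c t = even (bdrop_code t c)"
definition blength_code :: "nat \<Rightarrow> nat" where "blength_code c = (LEAST t. bdrop_code t c = 0 \<or> c \<le> t)"

lemma computable_bdrop_code[computable_intros]: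
  assumes "computable m F" "computable m G"
  shows "computable m (\<lambda>xs. bdrop_code (F xs) (G xs))"
proof -
  have "computable 2 (\<lambda>xs. rec_nat (nth0 xs 1) (\<lambda>n y. (y - 1) div 2) (nth0 xs 0))"
    by (intro computable_intros | simp only: nth0_tl)+
  then have "computable 2 (\<lambda>xs. bdrop_code (nth0 xs 0) (nth0 xs 1))" by (simp only: bdrop_code_def)
  then show ?thesis using assms by (rule computable_compose2)
qed

lemma decidable_even: "computable m F \<Longrightarrow> decidable m (\<lambda>xs. even (F xs))"
proof -
  assume "computable m F"
  then have "decidable m (\<lambda>xs. \<not> odd (F xs))" by (intro decidable_not decidable_odd)
  then show ?thesis by simp
qed

lemma decidable_bnth_code[computable_intros]:
  "computable m F \<Longrightarrow> computable m G \<Longrightarrow>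
   decidable m (\<lambda>xs. bnth_code (F xs) (G xs))"
  unfolding bnth_code_def by (intro decidable_even computable_bdrop_code)

lemma computable_blength_code[computable_intros]:
  assumes "computable m F"
  shows "computable m (\<lambda>xs. blength_code (F xs))"
proof -
  have "computable 1 (\<lambda>xs. LEAST t. bdrop_code t (nth0 xs 0) = 0 \<or> nth0 xs 0 \<le> t)"
    by (intro computable_intros | simp only: nth0_tl)+
  then have "computable 1 (\<lambda>xs. blength_code (nth0 xs 0))" by (simp only: blength_code_def)
  then show ?thesis using assms by (rule computable_compose1)
qed

lemma bdrop_code_bcode: "bdrop_code t (bcode w) = bcode (drop t w)"
proof (induction t)
  case 0 then show ?case by (simp add: bdrop_code_def)
next
  case (Suc t)
  have "bdrop_code (Suc t) (bcode w) = (bdrop_code t (bcode w) - 1) div 2" by (simp add: bdrop_code_def)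
  also have "\<dots> = (bcode (drop t w) - 1) div 2" using Suc by simp
  also have "\<dots> = bcode (drop (Suc t) w)"
  proof (cases "drop t w")
    case Nil then show ?thesis by (simp add: drop_Suc tl_drop)
  next
    case (Cons y ys) then show ?thesis by (simp add: drop_Suc tl_drop[symmetric])
  qed
  finally show ?case .
qed

lemma bnth_code_bcode: "t < length w \<Longrightarrow> bnth_code (bcode w) t = w ! t"
  by (simp add: bnth_code_def bdrop_code_bcode Cons_nth_drop_Suc[symmetric])

lemma bcode_eq_0_iff: "bcode w = 0 \<longleftrightarrow> w = []"
  by (cases w) auto

lemma length_le_bcode: "length w \<le> bcode w"
  by (induction w) auto

lemma blength_code_bcode: "blength_code (bcode w) = length w"
  unfolding blength_code_def
proof (rule Least_equality)
  show "bdrop_code (length w) (bcode w) = 0 \<or> bcode w \<le> length w" by (simp add: bdrop_code_bcode)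
  fix y assume "bdrop_code y (bcode w) = 0 \<or> bcode w \<le> y"
  then show "length w \<le> y"
  proof
    assume "bdrop_code y (bcode w) = 0"
    then have "drop y w = []" by (simp add: bdrop_code_bcode bcode_eq_0_iff)
    then show ?thesis by simp
  next
    assume "bcode w \<le> y" then show ?thesis using length_le_bcode[of w] by simp
  qed
qed

lemma bcode_inj: "bcode v = bcode w \<Longrightarrow> v = w"
proof (induction v arbitrary: w)
  case Nil then show ?case by (simp add: bcode_eq_0_iff)
next
  case (Cons a v)
  then obtain b w' where w: "w = b # w'" by (cases w) (auto split: if_splits)
  have "2 * bcode v + (if a then 2 else 1) = 2 * bcode w' + (if b then 2 else 1)"
    using Cons.prems w by simp
  then have "a = b \<and> bcode v = bcode w'" by (cases a; cases b) presburger+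
  then show ?case using Cons.IH w by simp
qed

lemma nat_eq_if_low_bits_eq:
  "(a::nat) < 2 ^ k \<Longrightarrow> b < 2 ^ k \<Longrightarrow> (\<forall>t<k. odd (a div 2 ^ t) = odd (b div 2 ^ t)) \<Longrightarrow> a = b"
proof (induction k arbitrary: a b)
  case 0 then show ?case by simp
next
  case (Suc k)
  have "\<forall>t<k. odd (a div 2 div 2 ^ t) = odd (b div 2 div 2 ^ t)"
  proof (intro allI impI)
    fix t assume "t < k"
    then have "odd (a div 2 ^ Suc t) = odd (b div 2 ^ Suc t)"
      using Suc.prems(3)[rule_format, of "Suc t"] by simp
    then show "odd (a div 2 div 2 ^ t) = odd (b div 2 div 2 ^ t)" by (simp add: div_mult2_eq)
  qed
  moreover have "a div 2 < 2 ^ k" "b div 2 < 2 ^ k" using Suc.prems by auto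
  ultimately have "a div 2 = b div 2" using Suc.IH by blast
  moreover have "odd a = odd b" using Suc.prems(3)[rule_format, of 0] by simp
  ultimately show ?case by (metis div_mult_mod_eq odd_iff_mod_2_eq_one parity_cases)
qed

lemma Least_low_bits_eq:
  fixes m n :: nat
  assumes "m \<le> n" "n < 2 ^ k" "\<forall>t<k. x t = odd (m div 2 ^ t)"
  shows "(LEAST i::nat. (\<forall>t<k. x t = odd (i div 2 ^ t)) \<or> n \<le> i) = m"
proof (rule Least_equality)
  show "(\<forall>t<k. x t = odd (m div 2 ^ t)) \<or> n \<le> m" using assms(3) by blast
  fix i assume i: "(\<forall>t<k. x t = odd (i div 2 ^ t)) \<or> n \<le> i"
  show "m \<le> i"
  proof (rule ccontr)
    assume "\<not> m \<le> i"
    with i assms have "\<forall>t<k. odd (i div 2 ^ t) = odd (m div 2 ^ t)" by auto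
    moreover have "i < 2 ^ k" "m < 2 ^ k" using assms \<open>\<not> m \<le> i\<close> by simp_all
    ultimately have "i = m" using nat_eq_if_low_bits_eq by blast
    with \<open>\<not> m \<le> i\<close> show False by simp
  qed
qed

section \<open>A tree of width \<open>n + 1\<close> whose paths choose a live label\<close>

text \<open>The tree has one branch for each label \<open>j \<le> n\<close>; \<open>alive l m\<close> says that \<open>m\<close> has not
  been enumerated into the complement before stage \<open>l\<close>. The state of a branch is coded as the
  number \<open>respawn_time * (n + 1) + label\<close>, where respawn time \<open>0\<close> means "never respawned" and
  \<open>Suc l\<close> means "split off at level \<open>l\<close>". Bits below \<open>label_bits n\<close> spell the label in binary
  and bit \<open>t \<ge> label_bits n\<close> is set iff the branch split off at level \<open>t\<close>. Branch \<open>j\<close> is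
  inspected at the levels \<open>l \<equiv> j mod (n + 1)\<close>: if its label is dead, it becomes a copy of the
  branch of the least live label (the donor) and splits off from it at level \<open>l\<close>.\<close>

definition label_bits :: "nat \<Rightarrow> nat" where
  "label_bits n = (LEAST k. Suc n \<le> 2 ^ k)"

definition donor :: "nat \<Rightarrow> (nat \<Rightarrow> nat \<Rightarrow> bool) \<Rightarrow> nat \<Rightarrow> nat" where
  "donor n alive l = (LEAST m. alive l m \<or> n \<le> m)"

definition state_step :: "nat \<Rightarrow> (nat \<Rightarrow> nat \<Rightarrow> bool) \<Rightarrow> nat \<Rightarrow> nat \<Rightarrow> nat \<Rightarrow> nat" where
  "state_step n alive j l s =
     (if label_bits n \<le> l \<and> l mod Suc n = j \<and> \<not> alive l (s mod Suc n)
      then Suc l * Suc n + donor n alive l else s)"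

definition branch_state :: "nat \<Rightarrow> (nat \<Rightarrow> nat \<Rightarrow> bool) \<Rightarrow> nat \<Rightarrow> nat \<Rightarrow> nat" where
  "branch_state n alive j L = rec_nat j (\<lambda>l s. state_step n alive j l s) L"

definition state_bit :: "nat \<Rightarrow> nat \<Rightarrow> nat \<Rightarrow> bool" where
  "state_bit n s t = ((t < label_bits n \<and> odd (s mod Suc n div 2 ^ t)) \<or> s div Suc n = Suc t)"

definition branch :: "nat \<Rightarrow> (nat \<Rightarrow> nat \<Rightarrow> bool) \<Rightarrow> nat \<Rightarrow> nat \<Rightarrow> bool list" where
  "branch n alive j L = map (state_bit n (branch_state n alive j L)) [0..<L]"

text \<open>Branches are compared only from level \<open>label_bits n\<close> on, where all labels are written down.\<close>

definition choice_tree :: "nat \<Rightarrow> (nat \<Rightarrow> nat \<Rightarrow> bool) \<Rightarrow> bool list set" where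
  "choice_tree n alive =
     {w. \<exists>j\<le>n. w = take (length w) (branch n alive j (max (length w) (label_bits n)))}"

lemma Suc_le_two_power_label_bits: "Suc n \<le> 2 ^ label_bits n"
proof -
  have "Suc n \<le> 2 ^ Suc n" by (induction n) auto
  then show ?thesis unfolding label_bits_def by (rule LeastI)
qed

lemma label_bits_le: "Suc n \<le> 2 ^ k \<Longrightarrow> label_bits n \<le> k"
  unfolding label_bits_def by (rule Least_le)

lemma branch_state_0[simp]: "branch_state n alive j 0 = j"
  by (simp add: branch_state_def)

lemma branch_state_Suc:
  "branch_state n alive j (Suc L) = state_step n alive j L (branch_state n alive j L)"
  by (simp add: branch_state_def)

lemma branch_state_cong:
  "(\<And>l m. l < L \<Longrightarrow> alive l m = alive' l m) \<Longrightarrow> branch_state n alive j L = branch_state n alive' j L"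
proof (induction L)
  case 0 then show ?case by simp
next
  case (Suc L)
  have "branch_state n alive j L = branch_state n alive' j L" using Suc by simp
  moreover have "alive L = alive' L" using Suc.prems by auto
  ultimately show ?case by (simp add: branch_state_Suc state_step_def donor_def)
qed

lemma donor_le: "donor n alive l \<le> n"
  unfolding donor_def by (rule Least_le) simp

lemma respawn_state_mod_div:
  assumes "d \<le> n"
  shows "(Suc l * Suc n + d) mod Suc n = d" "(Suc l * Suc n + d) div Suc n = Suc l"
proof -
  have "Suc l * Suc n + d = d + Suc l * Suc n" "d < Suc n" using assms by simp_all
  then show "(Suc l * Suc n + d) mod Suc n = d" "(Suc l * Suc n + d) div Suc n = Suc l"
    by (simp_all only: mod_mult_self1 div_mult_self1 Suc_not_Zero not_False_eq_True) simp_all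
qed

lemma state_step_keep:
  "\<not> (label_bits n \<le> l \<and> l mod Suc n = j \<and> \<not> alive l (s mod Suc n)) \<Longrightarrow> state_step n alive j l s = s"
  unfolding state_step_def by (rule if_not_P)

lemma state_step_respawn:
  "label_bits n \<le> l \<and> l mod Suc n = j \<and> \<not> alive l (s mod Suc n) \<Longrightarrow>
   state_step n alive j l s = Suc l * Suc n + donor n alive l"
  unfolding state_step_def by (rule if_P)

lemma length_branch[simp]: "length (branch n alive j L) = L"
  by (simp add: branch_def)

lemma branch_keep:
  assumes "branch_state n alive j (Suc L) = branch_state n alive j L"
  shows "branch n alive j (Suc L) = branch n alive j L @ [state_bit n (branch_state n alive j L) L]"
  unfolding branch_def using assms by simp

locale alive_labels =
  fixes n :: nat and alive :: "nat \<Rightarrow> nat \<Rightarrow> bool"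
  assumes alive_Suc_imp: "\<And>l m. alive (Suc l) m \<Longrightarrow> alive l m"
    and alive_forever_ex: "\<exists>a\<le>n. \<forall>l. alive l a"
begin

abbreviation "K \<equiv> label_bits n"
abbreviation "label s \<equiv> s mod Suc n"
abbreviation "respawn_time s \<equiv> s div Suc n"

definition "survivors = {m. m \<le> n \<and> (\<forall>l. alive l m)}"

lemma alive_le: "alive l m \<Longrightarrow> l' \<le> l \<Longrightarrow> alive l' m"
proof (induction l)
  case (Suc l) then show ?case using alive_Suc_imp by (cases "l' = Suc l") auto
qed simp

lemma donor_alive: "alive l (donor n alive l)"
proof -
  obtain a where a: "a \<le> n" "\<forall>l. alive l a" using alive_forever_ex by blast
  have "donor n alive l \<le> a" unfolding donor_def by (rule Least_le) (use a in blast)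
  moreover have "alive l (donor n alive l) \<or> n \<le> donor n alive l"
    unfolding donor_def by (rule LeastI[of _ a]) (use a in blast)
  ultimately show ?thesis using a by (metis le_antisym le_trans)
qed

lemma branch_state_cases:
  assumes "j \<le> n"
  shows "(respawn_time (branch_state n alive j L) = 0 \<and> label (branch_state n alive j L) = j) \<or>
    (\<exists>l. respawn_time (branch_state n alive j L) = Suc l \<and> K \<le> l \<and> l < L \<and> l mod Suc n = j \<and>
         label (branch_state n alive j L) = donor n alive l)"
proof (induction L)
  case 0 then show ?case using assms by simp
next
  case (Suc L)
  show ?case
  proof (cases "K \<le> L \<and> L mod Suc n = j \<and> \<not> alive L (label (branch_state n alive j L))")
    case True
    then have "branch_state n alive j (Suc L) = Suc L * Suc n + donor n alive L"
      unfolding branch_state_Suc by (rule state_step_respawn)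
    then show ?thesis using True respawn_state_mod_div[OF donor_le] by auto
  next
    case False
    then have "branch_state n alive j (Suc L) = branch_state n alive j L"
      unfolding branch_state_Suc by (rule state_step_keep)
    then show ?thesis using Suc by auto
  qed
qed

lemma branch_state_home:
  "j \<le> n \<Longrightarrow> (\<And>l. l < L \<Longrightarrow> alive l j) \<Longrightarrow>
   branch_state n alive j L = j"
  by (induction L) (simp_all add: branch_state_Suc state_step_keep)

lemma state_bit_low:
  "j \<le> n \<Longrightarrow> t < K \<Longrightarrow>
   state_bit n (branch_state n alive j L) t = odd (label (branch_state n alive j L) div 2 ^ t)"
  using branch_state_cases[of j L] unfolding state_bit_def by auto

lemma state_bit_high: "K \<le> t \<Longrightarrow> state_bit n s t = (respawn_time s = Suc t)"
  unfolding state_bit_def by simp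

lemma label_less: "label s < 2 ^ K"
  using Suc_le_two_power_label_bits[of n] by (meson mod_less_divisor zero_less_Suc order_less_le_trans)

lemma branch_respawn:
  assumes "K \<le> L" "L mod Suc n = j" "\<not> alive L (label (branch_state n alive j L))"
  shows "branch n alive j (Suc L) = branch n alive (donor n alive L) L @ [True]"
    and "branch n alive (donor n alive L) (Suc L) = branch n alive (donor n alive L) L @ [False]"
proof -
  let ?d = "donor n alive L"
  have s: "branch_state n alive j (Suc L) = Suc L * Suc n + ?d"
    using assms unfolding branch_state_Suc by (intro state_step_respawn) simp
  have home: "branch_state n alive ?d M = ?d" if "M \<le> Suc L" for M
  proof (rule branch_state_home[OF donor_le])
    fix l assume "l < M"
    then show "alive l ?d" using that alive_le[OF donor_alive] by simp
  qed
  have "state_bit n (branch_state n alive j (Suc L)) t = ((t < K \<and> odd (?d div 2 ^ t)) \<or> t = L)" for t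
    unfolding s state_bit_def respawn_state_mod_div[OF donor_le] by auto
  moreover have "state_bit n (branch_state n alive ?d L) t = (t < K \<and> odd (?d div 2 ^ t))" for t
    using home[of L] donor_le[of n alive L] by (simp add: state_bit_def)
  ultimately show "branch n alive j (Suc L) = branch n alive ?d L @ [True]"
    unfolding branch_def by simp
  show "branch n alive ?d (Suc L) = branch n alive ?d L @ [False]"
    unfolding branch_def using home[of L] home[of "Suc L"] donor_le[of n alive L] assms(1)
    by (simp add: state_bit_def)
qed

lemma branch_prefix_Suc:
  "j \<le> n \<Longrightarrow>
   \<exists>j'\<le>n. take L (branch n alive j (Suc L)) = branch n alive j' L"
proof (cases "K \<le> L \<and> L mod Suc n = j \<and> \<not> alive L (label (branch_state n alive j L))")
  case True
  then show ?thesis using branch_respawn(1)[of L j] donor_le[of n alive L] by auto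
next
  case False
  then have "branch_state n alive j (Suc L) = branch_state n alive j L"
    unfolding branch_state_Suc by (rule state_step_keep)
  then show "j \<le> n \<Longrightarrow> ?thesis" using branch_keep by auto
qed

lemma branch_prefix:
  "j \<le> n \<Longrightarrow> L \<le> L' \<Longrightarrow>
   \<exists>j'\<le>n. take L (branch n alive j L') = branch n alive j' L"
proof (induction L' arbitrary: j)
  case 0 then show ?case by (auto simp: branch_def)
next
  case (Suc L')
  show ?case
  proof (cases "L = Suc L'")
    case True then show ?thesis using Suc.prems by auto
  next
    case False
    then have "L \<le> L'" using Suc.prems by simp
    obtain j1 where j1: "j1 \<le> n" "take L' (branch n alive j (Suc L')) = branch n alive j1 L'"
      using branch_prefix_Suc Suc.prems by blast
    obtain j2 where j2: "j2 \<le> n" "take L (branch n alive j1 L') = branch n alive j2 L"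
      using Suc.IH j1(1) \<open>L \<le> L'\<close> by blast
    have "take L (branch n alive j (Suc L')) = take L (take L' (branch n alive j (Suc L')))"
      using \<open>L \<le> L'\<close> by (simp add: min_def)
    then show ?thesis using j1 j2 by auto
  qed
qed

text \<open>Two branches agreeing beyond \<open>label_bits n\<close> carry the same label and split off at the
  same level; a respawned branch \<open>j\<close> split off at some \<open>l \<equiv> j\<close>, so \<open>j\<close> is recovered.\<close>

lemma branch_inj:
  assumes j: "j \<le> n" "j' \<le> n" and "K \<le> L" and e: "branch n alive j L = branch n alive j' L"
  shows "j = j'"
proof -
  let ?s = "branch_state n alive j L" and ?s' = "branch_state n alive j' L"
  have bits: "state_bit n ?s t = state_bit n ?s' t" if "t < L" for t
    using arg_cong[OF e, of "\<lambda>xs. xs ! t"] that by (simp add: branch_def)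
  have "\<forall>t<K. odd (label ?s div 2 ^ t) = odd (label ?s' div 2 ^ t)"
  proof (intro allI impI)
    fix t assume "t < K"
    have "odd (label ?s div 2 ^ t) = state_bit n ?s t" using state_bit_low[OF j(1) \<open>t < K\<close>] by simp
    also have "\<dots> = state_bit n ?s' t" using bits \<open>t < K\<close> \<open>K \<le> L\<close> by simp
    also have "\<dots> = odd (label ?s' div 2 ^ t)" using state_bit_low[OF j(2) \<open>t < K\<close>] by simp
    finally show "odd (label ?s div 2 ^ t) = odd (label ?s' div 2 ^ t)" .
  qed
  then have label_eq: "label ?s = label ?s'"
    by (rule nat_eq_if_low_bits_eq[OF label_less label_less])
  obtain r r' where r: "respawn_time ?s = r" "respawn_time ?s' = r'" by simp
  have respawn_eq: "r = Suc t \<longleftrightarrow> r' = Suc t" if "K \<le> t" "t < L" for t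
    using bits[OF that(2)] unfolding state_bit_high[OF that(1)] r .
  have "(r = 0 \<and> label ?s = j) \<or> (\<exists>l. r = Suc l \<and> K \<le> l \<and> l < L \<and> l mod Suc n = j)"
    "(r' = 0 \<and> label ?s' = j') \<or> (\<exists>l. r' = Suc l \<and> K \<le> l \<and> l < L \<and> l mod Suc n = j')"
    using branch_state_cases[OF j(1), of L] branch_state_cases[OF j(2), of L] unfolding r by blast+
  then show ?thesis
  proof (elim disjE exE conjE)
    assume "label ?s = j" "label ?s' = j'"
    then show ?thesis using label_eq by metis
  next
    fix l assume "r = 0" "r' = Suc l" "K \<le> l" "l < L"
    then show ?thesis using respawn_eq[of l] by simp
  next
    fix l assume "r' = 0" "r = Suc l" "K \<le> l" "l < L"
    then show ?thesis using respawn_eq[of l] by simp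
  next
    fix l l' assume "r = Suc l" "K \<le> l" "l < L" "l mod Suc n = j" "r' = Suc l'" "l' mod Suc n = j'"
    then show ?thesis using respawn_eq[of l] by simp
  qed
qed

lemma choice_tree_level:
  "K \<le> k \<Longrightarrow> {w \<in> choice_tree n alive. length w = k} = (\<lambda>j. branch n alive j k) ` {..n}"
  unfolding choice_tree_def by (auto simp: max_def)

lemma branch_in_choice_tree:
  "j \<le> n \<Longrightarrow> K \<le> L \<Longrightarrow>
   branch n alive j L \<in> choice_tree n alive"
  using choice_tree_level[of L] by auto

lemma choice_tree_card_level:
  "Suc n \<le> 2 ^ k \<Longrightarrow> card {w \<in> choice_tree n alive. length w = k} = Suc n"
proof -
  assume "Suc n \<le> 2 ^ k"
  then have k: "K \<le> k" by (rule label_bits_le)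
  have "inj_on (\<lambda>j. branch n alive j k) {..n}"
    using branch_inj[OF _ _ k] by (auto intro: inj_onI)
  then show ?thesis using choice_tree_level[OF k] by (simp add: card_image)
qed

lemma is_tree_choice_tree: "is_tree (choice_tree n alive)"
  unfolding is_tree_def
proof (intro allI impI)
  fix w v assume "w @ v \<in> choice_tree n alive"
  then obtain j where j: "j \<le> n"
    "w @ v = take (length (w @ v)) (branch n alive j (max (length (w @ v)) K))"
    unfolding choice_tree_def by blast
  let ?L1 = "max (length w) K" and ?L2 = "max (length (w @ v)) K"
  have "?L1 \<le> ?L2" by auto
  then obtain j' where j': "j' \<le> n" "take ?L1 (branch n alive j ?L2) = branch n alive j' ?L1"
    using branch_prefix[OF j(1)] by blast
  have "w = take (length w) (w @ v)" by simp
  also have "\<dots> = take (length w) (branch n alive j ?L2)"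
    using j(2) by (metis take_take min.absorb1 le_add1 length_append)
  also have "\<dots> = take (length w) (take ?L1 (branch n alive j ?L2))" by (simp add: min_def)
  also have "\<dots> = take (length w) (branch n alive j' ?L1)" using j' by simp
  finally show "w \<in> choice_tree n alive" unfolding choice_tree_def using j'(1) by blast
qed

text \<open>From \<open>stable_time\<close> on no label dies any more, so every branch is inspected once more and then
  carries a surviving label forever; \<open>settle_time\<close> bounds this inspection for all branches.\<close>

lemma alive_eventually_constant:
  "\<exists>S. \<forall>l\<ge>S. \<forall>m\<le>n. alive l m = alive S m"
proof -
  have "\<exists>S. \<forall>l\<ge>S. alive l m = alive S m" for m
  proof (cases "\<forall>l. alive l m")
    case False
    then obtain l0 where "\<not> alive l0 m" by blast
    then show ?thesis using alive_le by blast
  qed auto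
  then obtain f where f: "\<forall>m. \<forall>l\<ge>f m. alive l m = alive (f m) m" by (metis choice)
  have "\<forall>l\<ge>(\<Sum>m\<le>n. f m). \<forall>m\<le>n. alive l m = alive (\<Sum>m\<le>n. f m) m"
  proof (intro allI impI)
    fix l m assume "(\<Sum>m\<le>n. f m) \<le> l" "m \<le> n"
    moreover have "f m \<le> (\<Sum>m\<le>n. f m)" using \<open>m \<le> n\<close> by (intro member_le_sum) auto
    ultimately show "alive l m = alive (\<Sum>m\<le>n. f m) m" using f by (metis order_trans)
  qed
  then show ?thesis by blast
qed

definition "stable_time = (SOME S. \<forall>l\<ge>S. \<forall>m\<le>n. alive l m = alive S m)"

definition "settle_time = Suc (max stable_time K) * Suc n"

lemma alive_stable:
  "stable_time \<le> l \<Longrightarrow> m \<le> n \<Longrightarrow> alive l m = alive stable_time m"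
  using someI_ex[OF alive_eventually_constant] unfolding stable_time_def by blast

lemma survivor_if_alive_after_stable:
  "stable_time \<le> l \<Longrightarrow> m \<le> n \<Longrightarrow> alive l m \<Longrightarrow>
   m \<in> survivors"
proof -
  assume a: "stable_time \<le> l" "m \<le> n" "alive l m"
  have "alive l' m" for l'
  proof (cases "stable_time \<le> l'")
    case True then show ?thesis using alive_stable[OF True a(2)] alive_stable[OF a(1) a(2)] a(3) by simp
  next
    case False
    then show ?thesis using alive_stable[OF a(1) a(2)] a(3) alive_le[of stable_time m l'] by simp
  qed
  then show ?thesis unfolding survivors_def using a(2) by blast
qed

lemma label_survives_after_inspection:
  assumes "stable_time \<le> l" "K \<le> l" "l mod Suc n = j"
  shows "label (branch_state n alive j (Suc l)) \<in> survivors"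
proof (cases "alive l (label (branch_state n alive j l))")
  case True
  then have "branch_state n alive j (Suc l) = branch_state n alive j l"
    unfolding branch_state_Suc by (intro state_step_keep) simp
  then show ?thesis using survivor_if_alive_after_stable[OF assms(1) _ True] by simp
next
  case False
  then have "branch_state n alive j (Suc l) = Suc l * Suc n + donor n alive l"
    unfolding branch_state_Suc using assms by (intro state_step_respawn) simp
  then show ?thesis
    using respawn_state_mod_div(1)[OF donor_le] survivor_if_alive_after_stable[OF assms(1) donor_le donor_alive]
    by simp
qed

lemma branch_state_constant:
  assumes "label (branch_state n alive j L0) \<in> survivors" "L0 \<le> L"
  shows "branch_state n alive j L = branch_state n alive j L0"
  using assms(2)
proof (induction L rule: dec_induct)
  case (step L)
  then have "alive L (label (branch_state n alive j L))" using assms(1) unfolding survivors_def by simp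
  then show ?case using step.IH unfolding branch_state_Suc by (subst state_step_keep) simp_all
qed simp

lemma branch_state_settled:
  assumes "j \<le> n" "settle_time \<le> L"
  shows "branch_state n alive j L = branch_state n alive j settle_time"
    and "label (branch_state n alive j L) \<in> survivors"
proof -
  define l where "l = j + max stable_time K * Suc n"
  have "max stable_time K \<le> max stable_time K * Suc n" by simp
  then have "max stable_time K \<le> l" unfolding l_def by linarith
  moreover have "l mod Suc n = j" unfolding l_def mod_mult_self1 using assms(1) by simp
  ultimately have survives: "label (branch_state n alive j (Suc l)) \<in> survivors"
    by (intro label_survives_after_inspection) simp_all
  have "Suc l \<le> settle_time" unfolding l_def settle_time_def using assms(1) by simp
  then have "branch_state n alive j L' = branch_state n alive j (Suc l)" if "settle_time \<le> L'" for L'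
    using branch_state_constant[OF survives, of L'] that by simp
  then show "branch_state n alive j L = branch_state n alive j settle_time"
    and "label (branch_state n alive j L) \<in> survivors"
    using assms(2) survives by simp_all
qed

lemma label_bits_le_settle_time: "K \<le> settle_time"
proof -
  have "K \<le> max stable_time K" by simp
  also have "\<dots> \<le> Suc (max stable_time K) * Suc n" by (simp only: mult_Suc_right)
  finally show ?thesis unfolding settle_time_def .
qed

lemma choice_tree_unary:
  assumes w: "w \<in> choice_tree n alive" "settle_time \<le> length w"
  shows "card {b. w @ [b] \<in> choice_tree n alive} = 1"
proof -
  let ?L = "length w"
  have KL: "K \<le> ?L" using w(2) label_bits_le_settle_time by simp
  then obtain j where j: "j \<le> n" "w = branch n alive j ?L"
    using choice_tree_level[OF KL] w(1) by blast
  have next_level: "branch n alive j' (Suc ?L) = branch n alive j' ?L @ [state_bit n (branch_state n alive j' ?L) ?L]"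
    if "j' \<le> n" for j'
    using branch_state_settled(1)[OF that w(2)] branch_state_settled(1)[OF that, of "Suc ?L"] w(2)
    by (intro branch_keep) simp
  have "{b. w @ [b] \<in> choice_tree n alive} = {state_bit n (branch_state n alive j ?L) ?L}"
  proof (intro set_eqI iffI)
    fix b assume "b \<in> {b. w @ [b] \<in> choice_tree n alive}"
    then have "w @ [b] \<in> {v \<in> choice_tree n alive. length v = Suc ?L}" by simp
    then obtain j' where j': "j' \<le> n" "w @ [b] = branch n alive j' (Suc ?L)"
      using choice_tree_level[of "Suc ?L"] KL by auto
    then have "branch n alive j' ?L = branch n alive j ?L" "b = state_bit n (branch_state n alive j' ?L) ?L"
      using next_level[OF j'(1)] j(2) by auto
    then show "b \<in> {state_bit n (branch_state n alive j ?L) ?L}"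
      using branch_inj[OF j'(1) j(1) KL] by simp
  next
    fix b assume "b \<in> {state_bit n (branch_state n alive j ?L) ?L}"
    then have "w @ [b] = branch n alive j (Suc ?L)" using next_level[OF j(1)] j(2) by simp
    then show "b \<in> {b. w @ [b] \<in> choice_tree n alive}"
      using branch_in_choice_tree[OF j(1)] KL by simp
  qed
  then show ?thesis by simp
qed

lemma width_tree_choice_tree: "width_tree (Suc n) (choice_tree n alive)"
  unfolding width_tree_def using choice_tree_card_level choice_tree_unary by blast

lemma paths_choice_tree_label:
  assumes "x \<in> paths (choice_tree n alive)"
  shows "(LEAST i. (\<forall>t<K. x t = odd (i div 2 ^ t)) \<or> n \<le> i) \<in> survivors"
proof -
  have "map x [0..<settle_time] \<in> {w \<in> choice_tree n alive. length w = settle_time}"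
    using assms unfolding paths_def by simp
  then obtain j where j: "j \<le> n" "map x [0..<settle_time] = branch n alive j settle_time"
    using choice_tree_level[OF label_bits_le_settle_time] by blast
  let ?m = "label (branch_state n alive j settle_time)"
  have survivor: "?m \<in> survivors" using branch_state_settled(2)[OF j(1) order_refl] .
  have "x t = odd (?m div 2 ^ t)" if "t < K" for t
  proof -
    have "t < settle_time" using that label_bits_le_settle_time by simp
    then have "x t = branch n alive j settle_time ! t" using arg_cong[OF j(2), of "\<lambda>xs. xs ! t"] by simp
    then show ?thesis using \<open>t < settle_time\<close> state_bit_low[OF j(1) that] by (simp add: branch_def)
  qed
  moreover have "?m \<le> n" "n < 2 ^ K" using survivor Suc_le_two_power_label_bits[of n]
    unfolding survivors_def by auto
  ultimately show ?thesis using Least_low_bits_eq[of ?m n K x] survivor by simp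
qed

lemma paths_choice_tree_nonempty:
  "state_bit n (branch_state n alive 0 settle_time) \<in> paths (choice_tree n alive)"
  unfolding paths_def
proof (intro CollectI allI)
  fix k
  let ?x = "state_bit n (branch_state n alive 0 settle_time)" and ?M = "max k settle_time"
  have "branch n alive 0 ?M = map ?x [0..<?M]"
    unfolding branch_def using branch_state_settled(1)[of 0 ?M] by simp
  then have "take k (map ?x [0..<?M]) @ drop k (map ?x [0..<?M]) \<in> choice_tree n alive"
    using branch_in_choice_tree[of 0 ?M] label_bits_le_settle_time by simp
  then have "take k (map ?x [0..<?M]) \<in> choice_tree n alive"
    using is_tree_choice_tree unfolding is_tree_def by blast
  then show "map ?x [0..<k] \<in> choice_tree n alive" by (simp add: take_map)
qed

end

section \<open>The reduction of \<open>C\<^sub>{\<^sub>0\<^sub>,\<^sub>.\<^sub>.\<^sub>.\<^sub>,\<^sub>n\<^sub>}\<close> to \<open>C\<^sub>\<sharp>\<^sub>=\<^sub>n\<^sub>+\<^sub>1\<close>\<close>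

text \<open>The queries answer \<open>0\<close>
  ("read more input") until the prefix is long enough, as required by \<open>tcomputes\<close>.\<close>

definition alive_code :: "nat \<Rightarrow> nat \<Rightarrow> nat \<Rightarrow> bool" where
  "alive_code pc l m = (\<not> (\<exists>t<l. nth_code pc t = Suc m))"
definition choice_tree_code :: "nat \<Rightarrow> nat \<Rightarrow> nat \<Rightarrow> bool" where
  "choice_tree_code n pc c =
     (\<exists>j<Suc n. \<forall>t<blength_code c.
        bnth_code c t = state_bit n (branch_state n (alive_code pc) j (max (blength_code c) (label_bits n))) t)"
definition tree_query :: "nat \<Rightarrow> nat \<Rightarrow> nat \<Rightarrow> nat" where
  "tree_query n c pc =
     (if length_code pc \<le> c + label_bits n then 0 else Suc (if choice_tree_code n pc c then 1 else 0))"
definition decode_label :: "nat \<Rightarrow> nat \<Rightarrow> nat" where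
  "decode_label n qc = (LEAST i. (\<forall>t<label_bits n. (nth_code qc t = 1) = odd (i div 2 ^ t)) \<or> n \<le> i)"
definition label_query :: "nat \<Rightarrow> nat \<Rightarrow> nat \<Rightarrow> nat" where
  "label_query n a qc =
     (if a = 0 then (if length_code qc < label_bits n then 0 else Suc (decode_label n qc)) else 1)"

lemma computable_donor[computable_intros]:
  assumes "computable m F" "computable m G"
  shows "computable m (\<lambda>xs. donor n (alive_code (F xs)) (G xs))"
proof -
  have "computable 2 (\<lambda>xs. donor n (alive_code (nth0 xs 0)) (nth0 xs 1))"
    unfolding donor_def alive_code_def
    by (intro computable_intros | simp only: nth0_tl)+
  then show ?thesis using assms
    by (rule computable_compose2)
qed

lemma decidable_alive_code[computable_intros]:
  assumes "computable m F" "computable m G" "computable m H"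
  shows "decidable m (\<lambda>xs. alive_code (F xs) (G xs) (H xs))"
proof -
  have "decidable 3 (\<lambda>xs. alive_code (nth0 xs 0) (nth0 xs 1) (nth0 xs 2))"
    unfolding alive_code_def
    by (intro computable_intros | simp only: nth0_tl)+
  then show ?thesis using assms
    unfolding decidable_def by (rule computable_compose3)
qed

lemma computable_branch_state[computable_intros]:
  assumes "computable m F" "computable m G" "computable m H"
  shows "computable m (\<lambda>xs. branch_state n (alive_code (F xs)) (G xs) (H xs))"
proof -
  have "computable 3 (\<lambda>xs. branch_state n (alive_code (nth0 xs 0)) (nth0 xs 1) (nth0 xs 2))"
    unfolding branch_state_def state_step_def
    by (intro computable_intros | simp only: nth0_tl)+
  then show ?thesis using assms
    by (rule computable_compose3)
qed

lemma decidable_state_bit[computable_intros]: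
  assumes "computable m F" "computable m G"
  shows "decidable m (\<lambda>xs. state_bit n (F xs) (G xs))"
proof -
  have "decidable 2 (\<lambda>xs. state_bit n (nth0 xs 0) (nth0 xs 1))"
    unfolding state_bit_def
    by (intro computable_intros | simp only: nth0_tl)+
  then show ?thesis using assms
    unfolding decidable_def by (rule computable_compose2)
qed

lemma computable_tree_query: "computable 2 (\<lambda>xs. tree_query n (nth0 xs 0) (nth0 xs 1))"
  unfolding tree_query_def choice_tree_code_def
  by (intro computable_intros | simp only: nth0_tl)+

lemma computable_label_query: "computable 2 (\<lambda>xs. label_query n (nth0 xs 0) (nth0 xs 1))"
  unfolding label_query_def decode_label_def
  by (intro computable_intros | simp only: nth0_tl)+

definition alive_enum :: "(nat \<Rightarrow> nat) \<Rightarrow> nat \<Rightarrow> nat \<Rightarrow> bool" where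
  "alive_enum p l m = (\<not> (\<exists>t<l. p t = Suc m))"

text \<open>Bit \<open>c\<close> of the name of the tree is fixed after reading \<open>c + label_bits n + 1\<close> values
  of \<open>p\<close>, which suffices since \<open>length w \<le> bcode w\<close>.\<close>

definition choice_tree_name :: "nat \<Rightarrow> (nat \<Rightarrow> nat) \<Rightarrow> nat \<Rightarrow> nat" where
  "choice_tree_name n p c =
     (if choice_tree_code n (prefix_code p (Suc (c + label_bits n))) c then 1 else 0)"

definition label_name :: "nat \<Rightarrow> (nat \<Rightarrow> nat) \<Rightarrow> nat \<Rightarrow> nat" where
  "label_name n q a = (if a = 0 then decode_label n (prefix_code q (label_bits n)) else 0)"

lemma delta_fin_closed_SomeD:
  "delta_fin_closed n p = Some A \<Longrightarrow> A = {k. k \<le> n \<and> (\<forall>i. p i \<noteq> Suc k)}"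
  unfolding delta_fin_closed_def by (auto split: if_splits)

lemma alive_labels_alive_enum:
  assumes "delta_fin_closed n p = Some A" "A \<noteq> {}"
  shows "alive_labels n (alive_enum p)"
proof
  fix l m assume "alive_enum p (Suc l) m" then show "alive_enum p l m" unfolding alive_enum_def by auto
next
  show "\<exists>a\<le>n. \<forall>l. alive_enum p l a"
    using assms delta_fin_closed_SomeD[OF assms(1)] unfolding alive_enum_def by blast
qed

lemma survivors_alive_enum_subset:
  assumes "delta_fin_closed n p = Some A" "A \<noteq> {}"
  shows "alive_labels.survivors n (alive_enum p) \<subseteq> A"
proof
  interpret alive_labels n "alive_enum p" using assms by (rule alive_labels_alive_enum)
  fix m assume "m \<in> survivors"
  then have "m \<le> n" "\<forall>i. p i \<noteq> Suc m"
    unfolding survivors_def alive_enum_def by (auto dest: spec[of _ "Suc _"])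
  then show "m \<in> A" using delta_fin_closed_SomeD[OF assms(1)] by blast
qed

lemma eq_map_upt_length_iff: "(w = map f [0..<length w]) = (\<forall>t<length w. w ! t = f t)"
proof
  assume w: "w = map f [0..<length w]"
  show "\<forall>t<length w. w ! t = f t"
  proof (intro allI impI)
    fix t assume "t < length w"
    then show "w ! t = f t" using arg_cong[OF w, of "\<lambda>xs. xs ! t"] by simp
  qed
qed (auto intro: nth_equalityI)

lemma eq_take_map_iff:
  "length w \<le> L \<Longrightarrow> (w = take (length w) (map f [0..<L])) = (\<forall>t<length w. w ! t = f t)"
  by (simp add: take_map min_def eq_map_upt_length_iff)

lemma choice_tree_code_correct:
  assumes k: "max (length w) (label_bits n) \<le> k"
  shows "choice_tree_code n (prefix_code p k) (bcode w) = (w \<in> choice_tree n (alive_enum p))"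
proof -
  let ?L = "max (length w) (label_bits n)"
  let ?bit = "\<lambda>j. state_bit n (branch_state n (alive_enum p) j ?L)"
  have state: "branch_state n (alive_code (prefix_code p k)) j ?L = branch_state n (alive_enum p) j ?L" for j
  proof (rule branch_state_cong)
    fix l m assume "l < ?L"
    then have "\<forall>t<l. nth_code (prefix_code p k) t = p t"
      using k by (intro allI impI nth_code_prefix_code) (simp add: max_def split: if_splits)
    then show "alive_code (prefix_code p k) l m = alive_enum p l m"
      unfolding alive_code_def alive_enum_def by auto
  qed
  have "choice_tree_code n (prefix_code p k) (bcode w) =
        (\<exists>j<Suc n. \<forall>t<length w. bnth_code (bcode w) t = ?bit j t)"
    by (simp only: choice_tree_code_def blength_code_bcode state)
  also have "\<dots> = (\<exists>j<Suc n. \<forall>t<length w. w ! t = ?bit j t)"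
    using bnth_code_bcode[of _ w] by (intro ex_cong1 all_cong1) (metis (no_types))
  also have "\<dots> = (\<exists>j\<le>n. w = take (length w) (branch n (alive_enum p) j ?L))"
    unfolding branch_def less_Suc_eq_le using eq_take_map_iff[of w ?L] by simp
  also have "\<dots> = (w \<in> choice_tree n (alive_enum p))"
    by (simp only: choice_tree_def mem_Collect_eq)
  finally show ?thesis .
qed

lemma delta_tree_choice_tree_name:
  assumes "alive_labels n (alive_enum p)"
  shows "delta_tree (choice_tree_name n p) = Some (choice_tree n (alive_enum p))"
proof -
  have "choice_tree_name n p (bcode w) = 1 \<longleftrightarrow> w \<in> choice_tree n (alive_enum p)" for w
    using choice_tree_code_correct[of w n "Suc (bcode w + label_bits n)" p] length_le_bcode[of w]
    unfolding choice_tree_name_def by simp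
  then have "{w. choice_tree_name n p (bcode w) = 1} = choice_tree n (alive_enum p)" by blast
  moreover have "\<forall>i. choice_tree_name n p i \<le> 1" by (simp add: choice_tree_name_def)
  ultimately show ?thesis
    unfolding delta_tree_def using alive_labels.is_tree_choice_tree[OF assms] by simp
qed

lemma label_name_survivor:
  assumes "alive_labels n alive" "delta_cantor q = Some x" "x \<in> paths (choice_tree n alive)"
  shows "label_name n q 0 \<in> alive_labels.survivors n alive"
proof -
  have "x = (\<lambda>i. q i = 1)" using assms(2) unfolding delta_cantor_def by (auto split: if_splits)
  then have "\<forall>t<label_bits n. (nth_code (prefix_code q (label_bits n)) t = 1) = x t"
    using nth_code_prefix_code by simp
  then show ?thesis
    using alive_labels.paths_choice_tree_label[OF assms(1,3)] by (simp add: label_name_def decode_label_def)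
qed

lemma tcomputes_by_query:
  assumes "computable 2 (\<lambda>xs. Q (nth0 xs 0) (nth0 xs 1))"
    and "\<And>p c k. k < b c \<Longrightarrow> Q c (prefix_code p k) = 0"
    and "\<And>p c. Q c (prefix_code p (b c)) = Suc (F p c)"
  shows "\<exists>\<phi>. \<forall>p. tcomputes \<phi> p (F p)"
proof -
  obtain \<phi> where "\<forall>xs. length xs = 2 \<longrightarrow> evalr \<phi> xs (Q (nth0 xs 0) (nth0 xs 1))"
    using assms(1) unfolding computable_def by blast
  then have ev: "evalr \<phi> [c, x] (Q c x)" for c x by (auto dest: spec[of _ "[c, x]"])
  have "tcomputes \<phi> p (F p)" for p
    unfolding tcomputes_def using ev assms(2,3) by (metis (no_types))
  then show ?thesis by blast
qed

lemma sW_leI: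
  assumes H: "\<forall>p. tcomputes \<phi>H p (H p)" and K: "\<forall>q. tcomputes \<phi>K q (K q)"
    and reduce: "\<And>p x. \<delta>X p = Some x \<Longrightarrow> f x \<noteq> {} \<Longrightarrow> \<exists>u. \<delta>U (H p) = Some u \<and> g u \<noteq> {} \<and>
       (\<forall>q v. \<delta>V q = Some v \<longrightarrow> v \<in> g u \<longrightarrow> (\<exists>y. \<delta>Y (K q) = Some y \<and> y \<in> f x))"
  shows "sW_le \<delta>X \<delta>Y f \<delta>U \<delta>V g"
  unfolding sW_le_def
proof (rule exI[of _ \<phi>K], rule exI[of _ \<phi>H], intro allI impI)
  fix G p x
  assume G: "is_realizer \<delta>U \<delta>V g G" and "\<delta>X p = Some x \<and> f x \<noteq> {}"
  then obtain u where u: "\<delta>U (H p) = Some u" "g u \<noteq> {}"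
    "\<forall>q v. \<delta>V q = Some v \<longrightarrow> v \<in> g u \<longrightarrow> (\<exists>y. \<delta>Y (K q) = Some y \<and> y \<in> f x)"
    using reduce by blast
  then obtain q v where "G (H p) = Some q" "\<delta>V q = Some v" "v \<in> g u"
    using G unfolding is_realizer_def by blast
  then show "\<exists>r q s y. tcomputes \<phi>H p r \<and> G r = Some q \<and> tcomputes \<phi>K q s \<and> \<delta>Y s = Some y \<and> y \<in> f x"
    using H K u(3) by blast
qed

lemma C_fin_sW_le_C_width:
  "sW_le (delta_fin_closed n) (delta_fin n) C_fin delta_tree delta_cantor (C_width (Suc n))"
proof -
  have "\<exists>\<phi>. \<forall>p. tcomputes \<phi> p (choice_tree_name n p)"
    by (rule tcomputes_by_query[OF computable_tree_query[of n], where b="\<lambda>c. Suc (c + label_bits n)"])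
      (simp_all add: tree_query_def length_code_prefix_code choice_tree_name_def)
  moreover have "\<exists>\<phi>. \<forall>q. tcomputes \<phi> q (label_name n q)"
    by (rule tcomputes_by_query[OF computable_label_query[of n], where b="\<lambda>a. if a = 0 then label_bits n else 0"])
      (simp_all add: label_query_def length_code_prefix_code label_name_def split: if_splits)
  ultimately obtain \<phi>H \<phi>K where H: "\<forall>p. tcomputes \<phi>H p (choice_tree_name n p)"
    and K: "\<forall>q. tcomputes \<phi>K q (label_name n q)" by blast
  show ?thesis
  proof (rule sW_leI[OF H K])
    fix p A assume p: "delta_fin_closed n p = Some A" and "C_fin A \<noteq> {}"
    then have alive: "alive_labels n (alive_enum p)"
      by (intro alive_labels_alive_enum) (simp_all add: C_fin_def)
    let ?T = "choice_tree n (alive_enum p)"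
    have width: "C_width (Suc n) ?T = paths ?T"
      unfolding C_width_def using alive_labels.width_tree_choice_tree[OF alive] by simp
    show "\<exists>T. delta_tree (choice_tree_name n p) = Some T \<and> C_width (Suc n) T \<noteq> {} \<and>
      (\<forall>q x. delta_cantor q = Some x \<longrightarrow> x \<in> C_width (Suc n) T \<longrightarrow>
         (\<exists>y. delta_fin n (label_name n q) = Some y \<and> y \<in> C_fin A))"
    proof (rule exI[of _ ?T], intro conjI allI impI)
      show "delta_tree (choice_tree_name n p) = Some ?T" by (rule delta_tree_choice_tree_name[OF alive])
      show "C_width (Suc n) ?T \<noteq> {}"
        unfolding width using alive_labels.paths_choice_tree_nonempty[OF alive] by blast
      fix q x assume "delta_cantor q = Some x" "x \<in> C_width (Suc n) ?T"
      then have "label_name n q 0 \<in> A"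
        using label_name_survivor[OF alive] survivors_alive_enum_subset[OF p] \<open>C_fin A \<noteq> {}\<close>
        unfolding width C_fin_def by blast
      then show "\<exists>y. delta_fin n (label_name n q) = Some y \<and> y \<in> C_fin A"
        using delta_fin_closed_SomeD[OF p] by (auto simp: delta_fin_def C_fin_def)
    qed
  qed
qed

section \<open>No reduction in the other direction\<close>

text \<open>Branch \<open>j\<close> of \<open>marked_tree n m\<close> spells \<open>j\<close> in its first \<open>n + 1\<close> bits and has a single further
  \<open>1\<close> at position \<open>n + 1 + m\<close>, which identifies \<open>m\<close> from any path.\<close>

definition marked_bit :: "nat \<Rightarrow> nat \<Rightarrow> nat \<Rightarrow> nat \<Rightarrow> bool" where
  "marked_bit n m j t = ((t < Suc n \<and> odd (j div 2 ^ t)) \<or> t = Suc n + m)"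
definition marked_tree :: "nat \<Rightarrow> nat \<Rightarrow> bool list set" where
  "marked_tree n m = {w. \<exists>j\<le>n. w = map (marked_bit n m j) [0..<length w]}"

lemma is_tree_marked_tree: "is_tree (marked_tree n m)"
  unfolding is_tree_def
proof (intro allI impI)
  fix w v assume "w @ v \<in> marked_tree n m"
  then obtain j where j: "j \<le> n" "w @ v = map (marked_bit n m j) [0..<length (w @ v)]" unfolding marked_tree_def by blast
  have "w = take (length w) (w @ v)" by simp
  also have "\<dots> = take (length w) (map (marked_bit n m j) [0..<length (w @ v)])" using j(2) by simp
  also have "\<dots> = map (marked_bit n m j) [0..<length w]" by (simp add: take_map)
  finally show "w \<in> marked_tree n m" unfolding marked_tree_def using j(1) by blast
qed

lemma marked_bit_inj:
  assumes j: "j \<le> n" "j' \<le> n" and k: "Suc n \<le> 2 ^ k"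
    and e: "map (marked_bit n m j) [0..<k] = map (marked_bit n m' j') [0..<k]"
  shows "j = j'"
proof -
  define L where "L = min k (Suc n)"
  have jL: "j < 2 ^ L" "j' < 2 ^ L"
  proof -
    have "Suc n \<le> 2 ^ Suc n" by (induction n) auto
    then have "Suc n \<le> 2 ^ L" unfolding L_def using k by (simp add: min_def)
    then show "j < 2 ^ L" "j' < 2 ^ L" using j by auto
  qed
  have "\<forall>t<L. odd (j div 2 ^ t) = odd (j' div 2 ^ t)"
  proof (intro allI impI)
    fix t assume t: "t < L"
    then have tk: "t < k" "t < Suc n" unfolding L_def by auto
    have "marked_bit n m j t = marked_bit n m' j' t" using arg_cong[OF e, of "\<lambda>xs. xs ! t"] tk(1) by simp
    then show "odd (j div 2 ^ t) = odd (j' div 2 ^ t)" using tk(2) unfolding marked_bit_def by simp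
  qed
  then show ?thesis by (rule nat_eq_if_low_bits_eq[OF jL])
qed

lemma marked_tree_level:
  "{w \<in> marked_tree n m. length w = k} = (\<lambda>j. map (marked_bit n m j) [0..<k]) ` {..n}"
  unfolding marked_tree_def by auto

lemma marked_tree_card_level:
  "Suc n \<le> 2 ^ k \<Longrightarrow> card {w \<in> marked_tree n m. length w = k} = Suc n"
proof -
  assume k: "Suc n \<le> 2 ^ k"
  have "inj_on (\<lambda>j. map (marked_bit n m j) [0..<k]) {..n}"
  proof (rule inj_onI)
    fix j j' assume "j \<in> {..n}" "j' \<in> {..n}" "map (marked_bit n m j) [0..<k] = map (marked_bit n m j') [0..<k]"
    then show "j = j'" using marked_bit_inj[OF _ _ k] by simp
  qed
  then show ?thesis unfolding marked_tree_level by (simp add: card_image)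
qed

lemma marked_tree_unary:
  "w \<in> marked_tree n m \<Longrightarrow> Suc n \<le> length w \<Longrightarrow>
   card {b. w @ [b] \<in> marked_tree n m} = 1"
proof -
  assume w: "w \<in> marked_tree n m" "Suc n \<le> length w"
  let ?L = "length w"
  obtain j where j: "j \<le> n" "w = map (marked_bit n m j) [0..<?L]" using w(1) unfolding marked_tree_def by blast
  have k2: "Suc n \<le> 2 ^ ?L"
  proof -
    have "Suc n \<le> 2 ^ Suc n" by (induction n) auto
    also have "\<dots> \<le> 2 ^ ?L" using w(2) by (intro power_increasing) auto
    finally show ?thesis .
  qed
  have "{b. w @ [b] \<in> marked_tree n m} = {marked_bit n m j ?L}"
  proof (rule set_eqI, rule iffI)
    fix b assume "b \<in> {b. w @ [b] \<in> marked_tree n m}"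
    then obtain j' where j': "j' \<le> n" "w @ [b] = map (marked_bit n m j') [0..<Suc ?L]"
      unfolding marked_tree_def by auto
    then have "w @ [b] = map (marked_bit n m j') [0..<?L] @ [marked_bit n m j' ?L]" by simp
    then have "w = map (marked_bit n m j') [0..<?L]" "b = marked_bit n m j' ?L" by auto
    then have "map (marked_bit n m j) [0..<?L] = map (marked_bit n m j') [0..<?L]" using j(2) by simp
    then have "j = j'" by (rule marked_bit_inj[OF j(1) j'(1) k2])
    then show "b \<in> {marked_bit n m j ?L}" using \<open>b = marked_bit n m j' ?L\<close> by simp
  next
    fix b assume "b \<in> {marked_bit n m j ?L}"
    then have "w @ [b] = map (marked_bit n m j) [0..<length (w @ [b])]" using j(2) by simp
    then show "b \<in> {b. w @ [b] \<in> marked_tree n m}" unfolding marked_tree_def using j(1) by blast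
  qed
  then show ?thesis by simp
qed

lemma width_tree_marked_tree: "width_tree (Suc n) (marked_tree n m)"
  unfolding width_tree_def using marked_tree_card_level marked_tree_unary by blast

lemma marked_bit_in_paths: "marked_bit n m 0 \<in> paths (marked_tree n m)"
  unfolding paths_def marked_tree_def by auto

lemma paths_marked_tree_mark:
  "x \<in> paths (marked_tree n m) \<Longrightarrow> x (Suc n + m') = (m' = m)"
proof -
  assume x: "x \<in> paths (marked_tree n m)"
  let ?k = "Suc (Suc n + m')"
  have "map x [0..<?k] \<in> marked_tree n m" using x unfolding paths_def by blast
  then obtain j where "map x [0..<?k] = map (marked_bit n m j) [0..<?k]" unfolding marked_tree_def by auto
  then have "x (Suc n + m') = marked_bit n m j (Suc n + m')"
    using arg_cong[of _ _ "\<lambda>xs. xs ! (Suc n + m')"] by fastforce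
  then show ?thesis unfolding marked_bit_def by simp
qed

lemma paths_marked_tree_unique:
  "x \<in> paths (marked_tree n m) \<Longrightarrow> x \<in> paths (marked_tree n m') \<Longrightarrow>
   m = m'"
  using paths_marked_tree_mark[of x n m m] paths_marked_tree_mark[of x n m' m] by simp

definition marked_tree_name :: "nat \<Rightarrow> nat \<Rightarrow> nat \<Rightarrow> nat" where
  "marked_tree_name n m c = (if \<exists>w\<in>marked_tree n m. bcode w = c then 1 else 0)"

lemma delta_tree_marked_tree_name: "delta_tree (marked_tree_name n m) = Some (marked_tree n m)"
proof -
  have "{w. marked_tree_name n m (bcode w) = 1} = marked_tree n m"
    unfolding marked_tree_name_def using bcode_inj by auto
  moreover have "\<forall>i. marked_tree_name n m i \<le> 1" by (simp add: marked_tree_name_def)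
  ultimately show ?thesis unfolding delta_tree_def using is_tree_marked_tree by simp
qed

definition fin_name :: "nat \<Rightarrow> nat \<Rightarrow> nat" where "fin_name i = (\<lambda>a. if a = 0 then i else 0)"

definition least_realizer :: "nat \<Rightarrow> (nat \<Rightarrow> nat) \<Rightarrow> (nat \<Rightarrow> nat) option" where
  "least_realizer n r = (case delta_fin_closed n r of Some A \<Rightarrow> if A \<noteq> {} then Some (fin_name (Min A)) else None | None \<Rightarrow> None)"

lemma Min_delta_fin_closed:
  assumes "delta_fin_closed n r = Some A" "A \<noteq> {}"
  shows "Min A \<in> A" "Min A \<le> n"
proof -
  have "A \<subseteq> {..n}" using delta_fin_closed_SomeD[OF assms(1)] by blast
  then have "finite A" by (rule finite_subset) simp
  then show "Min A \<in> A" using assms(2) by (rule Min_in)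
  with \<open>A \<subseteq> {..n}\<close> show "Min A \<le> n" by auto
qed

lemma least_realizer_is_realizer:
  "is_realizer (delta_fin_closed n) (delta_fin n) C_fin (least_realizer n)"
  unfolding is_realizer_def
proof (intro allI impI)
  fix p A assume "delta_fin_closed n p = Some A \<and> C_fin A \<noteq> {}"
  then have A: "delta_fin_closed n p = Some A" "A \<noteq> {}" by (auto simp: C_fin_def)
  then show "\<exists>q y. least_realizer n p = Some q \<and> delta_fin n q = Some y \<and> y \<in> C_fin A"
    using Min_delta_fin_closed[OF A]
    by (auto simp: least_realizer_def delta_fin_def fin_name_def C_fin_def)
qed

text \<open>Against the realizer that always answers with a constant name, a reduction can only
  produce the \<open>n + 1\<close> points computed from \<open>fin_name 0, \<dots>, fin_name n\<close>.\<close>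

lemma sW_le_C_fin_outputs:
  assumes "sW_le delta_tree delta_cantor (C_width (Suc n)) (delta_fin_closed n) (delta_fin n) C_fin"
  shows "\<exists>\<phi>. \<forall>m. \<exists>i\<le>n. \<exists>s y. tcomputes \<phi> (fin_name i) s \<and> delta_cantor s = Some y \<and>
    y \<in> paths (marked_tree n m)"
proof -
  obtain \<phi>K \<phi>H where "\<forall>G. is_realizer (delta_fin_closed n) (delta_fin n) C_fin G \<longrightarrow>
    (\<forall>p T. delta_tree p = Some T \<and> C_width (Suc n) T \<noteq> {} \<longrightarrow>
      (\<exists>r q s y. tcomputes \<phi>H p r \<and> G r = Some q \<and> tcomputes \<phi>K q s \<and>
         delta_cantor s = Some y \<and> y \<in> C_width (Suc n) T))"
    using assms unfolding sW_le_def by blast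
  note reduction = this[rule_format, OF least_realizer_is_realizer conjI]
  have "\<exists>i\<le>n. \<exists>s y. tcomputes \<phi>K (fin_name i) s \<and> delta_cantor s = Some y \<and> y \<in> paths (marked_tree n m)"
    for m
  proof -
    have width: "C_width (Suc n) (marked_tree n m) = paths (marked_tree n m)"
      unfolding C_width_def using width_tree_marked_tree by simp
    then obtain r q s y where rq: "least_realizer n r = Some q" and s: "tcomputes \<phi>K q s"
      "delta_cantor s = Some y" "y \<in> paths (marked_tree n m)"
      using reduction[OF delta_tree_marked_tree_name] marked_bit_in_paths by force
    from rq obtain A where "delta_fin_closed n r = Some A" "A \<noteq> {}" "q = fin_name (Min A)"
      unfolding least_realizer_def by (auto split: option.splits if_splits)
    then show ?thesis using s Min_delta_fin_closed(2) by blast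
  qed
  then show ?thesis by blast
qed

lemma C_width_not_sW_le_C_fin:
  "\<not> sW_le delta_tree delta_cantor (C_width (Suc n)) (delta_fin_closed n) (delta_fin n) C_fin"
proof
  assume "sW_le delta_tree delta_cantor (C_width (Suc n)) (delta_fin_closed n) (delta_fin n) C_fin"
  then obtain \<phi> where "\<forall>m. \<exists>i\<le>n. \<exists>s y. tcomputes \<phi> (fin_name i) s \<and>
    delta_cantor s = Some y \<and> y \<in> paths (marked_tree n m)"
    using sW_le_C_fin_outputs by blast
  then have "\<forall>m. \<exists>i. i \<le> n \<and> (\<exists>s y. tcomputes \<phi> (fin_name i) s \<and>
    delta_cantor s = Some y \<and> y \<in> paths (marked_tree n m))" by blast
  then obtain label where label: "\<forall>m. label m \<le> n \<and> (\<exists>s y. tcomputes \<phi> (fin_name (label m)) s \<and>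
    delta_cantor s = Some y \<and> y \<in> paths (marked_tree n m))"
    by (metis choice)
  have "inj label"
  proof (rule injI)
    fix m m' assume "label m = label m'"
    then obtain s y s' y' where "tcomputes \<phi> (fin_name (label m)) s" "delta_cantor s = Some y"
      "y \<in> paths (marked_tree n m)" "tcomputes \<phi> (fin_name (label m)) s'"
      "delta_cantor s' = Some y'" "y' \<in> paths (marked_tree n m')"
      using label by metis
    moreover from calculation have "s = s'" by (blast intro: tcomputes_functional)
    ultimately show "m = m'" using paths_marked_tree_unique by simp
  qed
  moreover have "finite (range label)"
    using label finite_subset[of "range label" "{..n}"] by auto
  ultimately have "finite (UNIV :: nat set)" using finite_imageD by blast
  then show False by simp
qed

theorem proposition25:
  fixes n :: nat
  shows "sW_less (delta_fin_closed n) (delta_fin n) C_fin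
                 delta_tree delta_cantor (C_width (Suc n))"
  unfolding sW_less_def using C_fin_sW_le_C_width C_width_not_sW_le_C_fin by blast

end
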